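(* Let $S$ be a compact strictly convex set in the plane and let $0<\alpha<\pi$. Let $q$ be the positive $x$-axis and $r$ the ray from the origin $O$ in the upper half-plane forming angle $\alpha$ with $q$. For $\theta\in[0,2\pi]$ let $S_\theta$ be the unique translate of the copy of $S$ rotated counterclockwise by angle $\theta$ such that $S_\theta$ is contained in the closed wedge bounded by $q$ and $r$ and touches both $q$ and $r$ (each of $q\cap S_\theta$ and $r\cap S_\theta$ is then a single point), let $Y(\theta)$ be the point of $r\cap S_\theta$, and let $f(\theta)=|OY(\theta)|$. Then $$\int_0^{2\pi} f(\theta)\,d\theta = \mathcal{P}(S)\,\frac{1+\cos\alpha}{\sin\alpha},$$ where $\mathcal{P}(S)$ is the perimeter of $S$.
   Context: A compact convex set in the plane is strictly convex if its boundary contains no nondegenerate line segment. *)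

theory Defs
  imports "HOL-Analysis.Analysis"
begin

text \<open>The plane is modelled as the complex plane; rotation by angle theta
  counterclockwise about the origin is multiplication by cis theta.\<close>

definition strictly_convex :: "complex set \<Rightarrow> bool" where
  "strictly_convex S \<longleftrightarrow> compact S \<and> convex S \<and>
     (\<forall>a b. a \<noteq> b \<longrightarrow> \<not> closed_segment a b \<subseteq> frontier S)"

definition ray :: "real \<Rightarrow> complex set" where
  "ray \<phi> = {complex_of_real \<rho> * cis \<phi> | \<rho>. \<rho> \<ge> 0}"

definition wedge :: "real \<Rightarrow> complex set" where
  "wedge \<alpha> = {complex_of_real a + complex_of_real b * cis \<alpha> | a b. a \<ge> 0 \<and> b \<ge> 0}"

definition placed :: "complex set \<Rightarrow> real \<Rightarrow> real \<Rightarrow> complex set" where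
  "placed S \<alpha> \<theta> = (THE T. \<exists>t. T = (\<lambda>z. t + cis \<theta> * z) ` S \<and> T \<subseteq> wedge \<alpha>
       \<and> T \<inter> ray 0 \<noteq> {} \<and> T \<inter> ray \<alpha> \<noteq> {})"

definition Ypt :: "complex set \<Rightarrow> real \<Rightarrow> real \<Rightarrow> complex" where
  "Ypt S \<alpha> \<theta> = (THE y. y \<in> placed S \<alpha> \<theta> \<inter> ray \<alpha>)"

definition fdist :: "complex set \<Rightarrow> real \<Rightarrow> real \<Rightarrow> real" where
  "fdist S \<alpha> \<theta> = norm (Ypt S \<alpha> \<theta>)"

definition curve_length :: "(real \<Rightarrow> complex) \<Rightarrow> real" where
  "curve_length g = Sup {(\<Sum>i<n. norm (g (t (Suc i)) - g (t i))) | n t.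
       t 0 = 0 \<and> t n = 1 \<and> (\<forall>i<n. t i \<le> t (Suc i))}"

text \<open>Perimeter: length of the boundary curve (a simple closed curve) of S;
  if the boundary is not a simple closed curve (S a single point) it is 0.\<close>
definition perimeter :: "complex set \<Rightarrow> real" where
  "perimeter S = (if \<exists>g. simple_path g \<and> pathfinish g = pathstart g \<and> path_image g = frontier S
     then curve_length (SOME g. simple_path g \<and> pathfinish g = pathstart g \<and> path_image g = frontier S)
     else 0)"

end

theory Submission
  imports Defs "HOL-Complex_Analysis.Contour_Integration"
begin

(* Everything is expressed through the support function  supp phi = max {proj z phi | z in S}
   of S, where proj z phi is the component of z in the direction cis phi, and through its
   maximiser, the support point supp_pt phi, which is unique because S is strictly convex.
   Then supp_pt is continuous and supp is differentiable with derivative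
   supp_deriv phi = proj (supp_pt phi) (phi + pi/2).

   1. (locale wedge_placement)  S_theta is the translate of the rotated copy by a vector whose
      coordinates are support values, and Y(theta) is a rotated support point.  Hence
        f theta = (supp (-pi/2 - theta) + cos alpha * supp (alpha + pi/2 - theta)) / sin alpha
                  - supp_deriv (alpha + pi/2 - theta),
      and integrating over a period gives (1 + cos alpha) / sin alpha times the integral of supp.
   2. (Cauchy's formula, perimeter_eq_supp_integral)  The perimeter is the integral of supp.
      With  arc_len a b = supp_deriv b - supp_deriv a + integral of supp over [a, b],  every chord
      satisfies  cos ((b - a)/2) * arc_len a b <= |supp_pt b - supp_pt a| <= arc_len a b
      (locale strictly_convex_set).  Seen from an interior point c, the polar angle of supp_pt phi
      is nondecreasing in phi (locale interior_ball), so a simple closed parametrisation of the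
      boundary meets the support points in the order of their normal angles (locales
      boundary_curve, boundary_curve_ccw).  Its inscribed polygons are thus at most the integral,
      while polygons through support points at equally spaced normal angles approach it.
      If S has no interior point it is a single point, and both sides vanish. *)

definition proj :: "complex \<Rightarrow> real \<Rightarrow> real" where
  "proj z \<phi> = Re z * cos \<phi> + Im z * sin \<phi>"

lemma proj_add: "proj (a + b) \<phi> = proj a \<phi> + proj b \<phi>"
  by (simp add: proj_def algebra_simps)

lemma proj_diff: "proj (a - b) \<phi> = proj a \<phi> - proj b \<phi>"
  by (simp add: proj_def algebra_simps)

lemma proj_scale: "proj (complex_of_real r * a) \<phi> = r * proj a \<phi>"
  by (simp add: proj_def algebra_simps)

lemma proj_rot: "proj (cis \<theta> * w) \<phi> = proj w (\<phi> - \<theta>)"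
  by (simp add: proj_def cos_diff sin_diff algebra_simps)

lemma proj_periodic: "proj z (\<phi> + 2*pi) = proj z \<phi>"
  by (simp add: proj_def)

lemma proj_cis: "proj (cis a) \<phi> = cos (\<phi> - a)"
  by (simp add: proj_def cos_diff algebra_simps)

lemma proj_down: "proj z (-(pi/2)) = - Im z"
  by (simp add: proj_def)

lemma proj_perp: "proj z (\<alpha> + pi/2) = Im z * cos \<alpha> - Re z * sin \<alpha>"
  by (simp add: proj_def cos_add sin_add)

lemma proj_le_norm: "proj z \<phi> \<le> norm z"
proof -
  have "proj z \<phi> = inner z (cis \<phi>)" by (simp add: proj_def inner_complex_def)
  also have "\<dots> \<le> norm z * norm (cis \<phi>)" by (rule norm_cauchy_schwarz)
  finally show ?thesis by simp
qed

lemma abs_proj_le_norm: "\<bar>proj z \<phi>\<bar> \<le> norm z"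
  using proj_le_norm[of z \<phi>] proj_le_norm[of "-z" \<phi>] by (simp add: proj_def)

lemma continuous_on_proj[continuous_intros]:
  "continuous_on (A::'a::t2_space set) f \<Longrightarrow> continuous_on A g \<Longrightarrow> continuous_on A (\<lambda>x. proj (f x) (g x))"
  unfolding proj_def by (auto intro!: continuous_intros)

text \<open>The components in the directions x and x + pi/2 determine the component in every other
  direction; this rotation rule evaluates components in the middle direction of a chord.\<close>
lemma proj_rotate_frame:
  "cos h * proj z (x + pi/2) + sin h * proj z x = proj z (x - h + pi/2)"
  by (simp add: proj_def cos_add sin_add cos_diff sin_diff algebra_simps)

text \<open>The same rule for the rotation by alpha + pi/2 relating the normals of the two rays.\<close>
lemma proj_shift_alpha: "proj z (\<phi> - \<alpha> - pi) = - (cos \<alpha> * proj z \<phi> - sin \<alpha> * proj z (\<phi> + pi/2))"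
  by (simp add: proj_def cos_diff sin_diff cos_add sin_add algebra_simps)

lemma proj_has_integral:
  assumes "a \<le> b"
  shows "((\<lambda>\<phi>. proj z \<phi>) has_integral (proj z (a + pi/2) - proj z (b + pi/2))) {a..b}"
proof -
  have "((\<lambda>\<phi>. proj z \<phi>) has_integral (- proj z (b + pi/2) - (- proj z (a + pi/2)))) {a..b}"
  proof (rule fundamental_theorem_of_calculus[OF assms])
    fix x assume "x \<in> {a..b}"
    have "((\<lambda>\<phi>. - proj z (\<phi> + pi/2)) has_real_derivative proj z x) (at x)"
      unfolding proj_perp by (auto intro!: derivative_eq_intros simp: proj_def)
    then show "((\<lambda>\<phi>. - proj z (\<phi> + pi/2)) has_vector_derivative proj z x) (at x within {a..b})"
      by (simp add: has_real_derivative_iff_has_vector_derivative[symmetric] has_field_derivative_at_within)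
  qed
  then show ?thesis by simp
qed

definition cross :: "complex \<Rightarrow> complex \<Rightarrow> real" where
  "cross x y = Re x * Im y - Im x * Re y"

lemma cross_proj: "cross x y = proj x \<phi> * proj y (\<phi> + pi/2) - proj x (\<phi> + pi/2) * proj y \<phi>"
proof -
  have "proj x \<phi> * proj y (\<phi> + pi/2) - proj x (\<phi> + pi/2) * proj y \<phi> =
        (Re x * Im y - Im x * Re y) * ((sin \<phi>)\<^sup>2 + (cos \<phi>)\<^sup>2)"
    unfolding proj_perp unfolding proj_def by algebra
  then show ?thesis by (simp add: cross_def)
qed

lemma cross_cis: "cross (complex_of_real r * cis a) (complex_of_real r' * cis b) = r * r' * sin (b - a)"
  by (simp add: cross_def sin_diff algebra_simps)

lemma sin_diff_left_has_integral:
  fixes a b :: real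
  assumes "a \<le> b"
  shows "((\<lambda>\<phi>. sin (b - \<phi>)) has_integral (1 - cos (b - a))) {a..b}"
proof -
  have "((\<lambda>\<phi>. sin (b - \<phi>)) has_integral (cos (b - b) - cos (b - a))) {a..b}"
  proof (rule fundamental_theorem_of_calculus[OF assms])
    fix x assume "x \<in> {a..b}"
    have "((\<lambda>\<phi>. cos (b - \<phi>)) has_real_derivative sin (b - x)) (at x)"
      by (auto intro!: derivative_eq_intros)
    then show "((\<lambda>\<phi>. cos (b - \<phi>)) has_vector_derivative sin (b - x)) (at x within {a..b})"
      by (simp add: has_real_derivative_iff_has_vector_derivative[symmetric] has_field_derivative_at_within)
  qed
  then show ?thesis by simp
qed

lemma sin_diff_right_has_integral:
  fixes a b :: real
  assumes "a \<le> b"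
  shows "((\<lambda>\<phi>. sin (\<phi> - a)) has_integral (1 - cos (b - a))) {a..b}"
proof -
  have "((\<lambda>\<phi>. sin (\<phi> - a)) has_integral (- cos (b - a) - (- cos (a - a)))) {a..b}"
  proof (rule fundamental_theorem_of_calculus[OF assms])
    fix x assume "x \<in> {a..b}"
    have "((\<lambda>\<phi>. - cos (\<phi> - a)) has_real_derivative sin (x - a)) (at x)"
      by (auto intro!: derivative_eq_intros)
    then show "((\<lambda>\<phi>. - cos (\<phi> - a)) has_vector_derivative sin (x - a)) (at x within {a..b})"
      by (simp add: has_real_derivative_iff_has_vector_derivative[symmetric] has_field_derivative_at_within)
  qed
  then show ?thesis by simp
qed

lemma periodic_shift_int:
  assumes per: "\<And>x. f (x + 2*pi) = (f x :: real)"
  shows "f (x + 2*pi*real_of_int k) = f x"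
proof -
  have nat: "f (y + 2*pi*real n) = f y" for y n
  proof (induction n)
    case (Suc n)
    have "y + 2*pi*real (Suc n) = (y + 2*pi*real n) + 2*pi" by (simp add: algebra_simps)
    then show ?case using Suc per by metis
  qed simp
  show ?thesis
  proof (cases "k \<ge> 0")
    case True
    then show ?thesis using nat[of x "nat k"] by simp
  next
    case False
    then have "f (x + 2*pi*real_of_int k + 2*pi*real (nat (- k))) = f (x + 2*pi*real_of_int k)"
      by (rule_tac nat)
    then show ?thesis using False by (simp add: algebra_simps)
  qed
qed

lemma period_integral_base:
  fixes f :: "real \<Rightarrow> real"
  assumes cont: "continuous_on UNIV f" and per: "\<And>x. f (x + 2*pi) = f x"
    and a: "0 \<le> a" "a \<le> 2*pi"
  shows "integral {a..a+2*pi} f = integral {0..2*pi} f"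
proof -
  have int: "f integrable_on {u..v}" for u v
    by (rule integrable_continuous_real) (rule continuous_on_subset[OF cont], simp)
  have "integral {a..a+2*pi} f = integral {a..2*pi} f + integral {2*pi..a+2*pi} f"
    using Henstock_Kurzweil_Integration.integral_combine[where a=a and c="2*pi" and b="a+2*pi" and f=f] a int by simp
  also have "integral {2*pi..a+2*pi} f = integral {0..a} f"
  proof -
    have "integral (cbox (2*pi - 2*pi) (a + 2*pi - 2*pi)) (\<lambda>x. f (x + 2*pi)) = integral (cbox (2*pi) (a+2*pi)) f"
      by (rule integral_shift_cbox)
    then show ?thesis using per by simp
  qed
  also have "integral {a..2*pi} f + integral {0..a} f = integral {0..2*pi} f"
    using Henstock_Kurzweil_Integration.integral_combine[where a=0 and c=a and b="2*pi" and f=f] a int by simp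
  finally show ?thesis .
qed

lemma period_integral:
  fixes f :: "real \<Rightarrow> real"
  assumes cont: "continuous_on UNIV f" and per: "\<And>x. f (x + 2*pi) = f x"
  shows "integral {a..a+2*pi} f = integral {0..2*pi} f"
proof -
  define k where "k = \<lfloor>a / (2*pi)\<rfloor>"
  define a' where "a' = a - 2*pi*real_of_int k"
  have k: "real_of_int k \<le> a / (2*pi)" "a / (2*pi) < real_of_int k + 1"
    unfolding k_def by linarith+
  have a'0: "0 \<le> a'" using k(1) pi_gt_zero by (simp add: a'_def field_simps)
  have a'1: "a' \<le> 2*pi" using k(2) pi_gt_zero by (simp add: a'_def field_simps)
  have "integral (cbox (a - 2*pi*real_of_int k) (a + 2*pi - 2*pi*real_of_int k))
          (\<lambda>x. f (x + 2*pi*real_of_int k)) = integral (cbox a (a+2*pi)) f"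
    by (rule integral_shift_cbox)
  moreover have "(\<lambda>x. f (x + 2*pi*real_of_int k)) = f" using periodic_shift_int[of f, OF per] by auto
  ultimately have "integral {a..a+2*pi} f = integral {a'..a'+2*pi} f"
    by (simp add: a'_def algebra_simps)
  also have "\<dots> = integral {0..2*pi} f" by (rule period_integral_base[OF cont per a'0 a'1])
  finally show ?thesis .
qed

lemma reflect_period_has_integral:
  fixes f :: "real \<Rightarrow> real"
  assumes cont: "continuous_on UNIV f" and per: "\<And>x. f (x + 2*pi) = f x"
  shows "((\<lambda>\<theta>. f (c - \<theta>)) has_integral integral {0..2*pi} f) {0..2*pi}"
proof -
  have "f integrable_on {c - 2*pi..(c - 2*pi) + 2*pi}"
    by (rule integrable_continuous_real) (rule continuous_on_subset[OF cont], simp)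
  then have "(f has_integral integral {0..2*pi} f) {c - 2*pi..(c - 2*pi) + 2*pi}"
    using period_integral[OF cont per, of "c - 2*pi"] by (metis has_integral_integral)
  then have "((\<lambda>x. f (x + c)) has_integral integral {0..2*pi} f) {(c - 2*pi) - c..(c - 2*pi) + 2*pi - c}"
    by (rule has_integral_shift_real_ivl)
  then have "((\<lambda>x. f (x + c)) has_integral integral {0..2*pi} f) {-(2*pi)..0}" by simp
  then have "((\<lambda>x. f (- x + c)) has_integral integral {0..2*pi} f) {-0..-(-(2*pi))}"
    using has_integral_reflect_real[where f="\<lambda>x. f (x + c)" and a="-(2*pi)" and b=0] by simp
  then show ?thesis by (simp add: algebra_simps)
qed

lemma cos_ne_1_within_period:
  assumes "0 < y" "y < 2*pi" shows "cos y \<noteq> 1"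
proof -
  have "sin (y/2) > 0" using assms by (intro sin_gt_zero) auto
  moreover have "cos y = 1 - 2 * (sin (y/2))\<^sup>2" using cos_double_sin[of "y/2"] by simp
  ultimately show ?thesis by simp
qed

lemma polar_arctan:
  assumes "Re q > 0"
  shows "q = complex_of_real (norm q) * cis (arctan (Im q / Re q))"
proof -
  define u where "u = Im q / Re q"
  have "norm q = sqrt ((Re q)\<^sup>2 * (1 + u\<^sup>2))"
    using assms by (simp add: cmod_def u_def field_simps power2_eq_square)
  also have "\<dots> = Re q * sqrt (1 + u\<^sup>2)" using assms by (simp add: real_sqrt_mult)
  finally have n: "norm q = Re q * sqrt (1 + u\<^sup>2)" .
  have "sqrt (1 + u\<^sup>2) > 0" by (simp add: add_pos_nonneg)
  then show ?thesis unfolding u_def[symmetric] n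
    using assms by (simp add: complex_eq_iff cos_arctan sin_arctan u_def)
qed

lemma chain_mono:
  fixes a :: "nat \<Rightarrow> real"
  assumes "\<forall>i<n. a i \<le> a (Suc i)" "i \<le> j" "j \<le> n"
  shows "a i \<le> a j"
  by (rule lift_Suc_mono_le_ivl[where N="{..<n}"]) (use assms in auto)

definition inscribed_lengths :: "(real \<Rightarrow> complex) \<Rightarrow> real set" where
  "inscribed_lengths g = {(\<Sum>i<n. norm (g (t (Suc i)) - g (t i))) | n t.
       t 0 = 0 \<and> t n = 1 \<and> (\<forall>i<n. t i \<le> t (Suc i))}"

lemma curve_length_Sup: "curve_length g = Sup (inscribed_lengths g)"
  by (simp add: curve_length_def inscribed_lengths_def)

text \<open>Reversing the curve and the partition gives the same polygon, so reversal preserves length.\<close>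
lemma inscribed_lengths_reversepath_subset: "inscribed_lengths g \<subseteq> inscribed_lengths (reversepath g)"
proof
  fix y assume "y \<in> inscribed_lengths g"
  then obtain n t where y: "y = (\<Sum>i<n. norm (g (t (Suc i)) - g (t i)))"
    and t: "t 0 = 0" "t n = 1" "\<forall>i<n. t i \<le> t (Suc i)" by (auto simp: inscribed_lengths_def)
  define t' where "t' i = 1 - t (n - i)" for i
  have t'0: "t' 0 = 0" "t' n = 1" using t by (auto simp: t'_def)
  have t'm: "\<forall>i<n. t' i \<le> t' (Suc i)"
  proof (intro allI impI)
    fix i assume i: "i < n"
    then have "n - i = Suc (n - Suc i)" by simp
    then show "t' i \<le> t' (Suc i)" using t(3) i by (simp add: t'_def)
  qed
  define f where "f j = norm (g (t (Suc j)) - g (t j))" for j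
  have "y = (\<Sum>i<n. f (n - Suc i))" unfolding y f_def by (rule sum.nat_diff_reindex[symmetric])
  also have "\<dots> = (\<Sum>i<n. norm (reversepath g (t' (Suc i)) - reversepath g (t' i)))"
  proof (rule sum.cong)
    fix i assume "i \<in> {..<n}"
    then have "n - i = Suc (n - Suc i)" by simp
    then show "f (n - Suc i) = norm (reversepath g (t' (Suc i)) - reversepath g (t' i))"
      by (simp add: reversepath_def t'_def f_def norm_minus_commute)
  qed simp
  finally show "y \<in> inscribed_lengths (reversepath g)"
    unfolding inscribed_lengths_def using t'0 t'm by blast
qed

lemma curve_length_reversepath: "curve_length (reversepath g) = curve_length g"
  using inscribed_lengths_reversepath_subset[of g]
    inscribed_lengths_reversepath_subset[of "reversepath g"]
  by (simp add: curve_length_Sup)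

lemma chord_normal_between:
  assumes d: "d \<noteq> 0" and ab: "a < b" "b \<le> a + pi"
    and at_a: "proj d a \<le> 0" and at_b: "0 \<le> proj d b"
  obtains m where "a \<le> m" "m \<le> b" "proj d (m + pi/2) = norm d"
proof -
  have nd: "norm d > 0" using d by simp
  define u where "u = d * cis (-a) * (- \<i>) / complex_of_real (norm d)"
  have "norm u = 1" using nd by (simp add: u_def norm_mult norm_divide)
  then have "(Re u)\<^sup>2 + (Im u)\<^sup>2 = 1" by (simp add: cmod_def)
  then obtain x where x: "0 \<le> x" "x < 2*pi" "Re u = cos x" "Im u = sin x"
    using sincos_total_2pi by metis
  have ux: "u = cis x" using x by (simp add: complex_eq_iff)
  have "complex_of_real (norm d) * \<i> * cis a * u = d * (cis a * cis (-a)) * (\<i> * (- \<i>))"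
    using nd unfolding u_def by (simp add: field_simps)
  also have "\<dots> = d" by (simp add: cis_mult)
  finally have d_polar: "d = complex_of_real (norm d) * \<i> * cis (a + x)"
    unfolding ux by (simp add: cis_mult[symmetric] mult.assoc)
  have proj_d: "proj d \<phi> = norm d * sin (\<phi> - (a + x))" for \<phi>
  proof -
    have "proj d \<phi> = proj (complex_of_real (norm d) * \<i> * cis (a + x)) \<phi>"
      using arg_cong[OF d_polar, of "\<lambda>z. proj z \<phi>"] .
    also have "\<dots> = norm d * sin (\<phi> - (a + x))"
      by (simp add: proj_def cos_diff sin_diff algebra_simps)
    finally show ?thesis .
  qed
  have "norm d * sin (- x) \<le> 0" using at_a proj_d[of a] by simp
  then have "sin x \<ge> 0" using d by (simp add: mult_le_0_iff zero_le_mult_iff)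
  then have x_pi: "x \<le> pi" using x sin_lt_zero[of x] by force
  have sin_b: "sin (b - (a + x)) \<ge> 0" using at_b proj_d[of b] nd by (simp add: zero_le_mult_iff)
  have "a + x \<le> b"
  proof (rule ccontr)
    assume "\<not> a + x \<le> b"
    then have y: "b - (a + x) < 0" "- pi < b - (a + x)" using x_pi ab by auto
    then have "sin (- (b - (a + x))) > 0" by (intro sin_gt_zero) auto
    moreover have "sin (- (b - (a + x))) = - sin (b - (a + x))" by (rule sin_minus)
    ultimately show False using sin_b by linarith
  qed
  moreover have "proj d (a + x + pi/2) = norm d" using proj_d[of "a + x + pi/2"] by simp
  ultimately show ?thesis using that[of "a + x"] x(1) by simp
qed

locale strictly_convex_set =
  fixes S :: "complex set"
  assumes strictly_convex: "strictly_convex S" and nonempty: "S \<noteq> {}"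
begin

lemma compact: "compact S" and convex: "convex S"
  and no_boundary_segment: "\<And>a b. a \<noteq> b \<Longrightarrow> \<not> closed_segment a b \<subseteq> frontier S"
  using strictly_convex by (auto simp: strictly_convex_def)

lemma max_exists: "\<exists>z\<in>S. \<forall>w\<in>S. proj w \<phi> \<le> proj z \<phi>"
proof -
  have "continuous_on S (\<lambda>z. proj z \<phi>)" by (intro continuous_intros)
  then have "compact ((\<lambda>z. proj z \<phi>) ` S)" by (rule compact_continuous_image[OF _ compact])
  moreover have "(\<lambda>z. proj z \<phi>) ` S \<noteq> {}" using nonempty by auto
  ultimately obtain m where "m \<in> (\<lambda>z. proj z \<phi>) ` S" "\<forall>y\<in>(\<lambda>z. proj z \<phi>) ` S. y \<le> m"
    using compact_attains_sup by blast
  then show ?thesis by auto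
qed

text \<open>A maximiser of a linear functional lies on the boundary (it can be pushed outwards).\<close>
lemma max_frontier:
  assumes "p \<in> S" "\<forall>w\<in>S. proj w \<phi> \<le> proj p \<phi>"
  shows "p \<in> frontier S"
proof -
  have "p \<notin> interior S"
  proof
    assume "p \<in> interior S"
    then obtain e where e: "e > 0" "ball p e \<subseteq> S" by (auto simp: mem_interior)
    define p' where "p' = p + complex_of_real (e/2) * cis \<phi>"
    have "dist p p' = e/2" using e by (simp add: p'_def dist_norm norm_mult)
    then have "p' \<in> S" using e by auto
    moreover have "proj p' \<phi> = proj p \<phi> + e/2"
      unfolding p'_def by (simp only: proj_add proj_scale proj_cis) simp
    ultimately show False using assms(2) e by force
  qed
  then show ?thesis using assms(1) compact_imp_closed[OF compact] by (simp add: frontier_def)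
qed

text \<open>Strict convexity: the maximiser is unique, since otherwise the segment between two
  maximisers would consist of maximisers and hence lie in the boundary.\<close>
lemma max_unique:
  assumes "p \<in> S" "\<forall>w\<in>S. proj w \<phi> \<le> proj p \<phi>" "q \<in> S" "\<forall>w\<in>S. proj w \<phi> \<le> proj q \<phi>"
  shows "p = q"
proof (rule ccontr)
  assume "p \<noteq> q"
  have pq: "proj p \<phi> = proj q \<phi>" using assms by force
  have "closed_segment p q \<subseteq> frontier S"
  proof
    fix x assume x: "x \<in> closed_segment p q"
    then obtain u where u: "x = (1 - u) *\<^sub>R p + u *\<^sub>R q"
      by (auto simp: closed_segment_def)
    have xS: "x \<in> S" using x convex assms convex_contains_segment by blast
    have "proj x \<phi> = (1-u) * proj p \<phi> + u * proj q \<phi>"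
      unfolding u by (simp add: proj_def scaleR_conv_of_real algebra_simps)
    also have "\<dots> = proj p \<phi>" using pq by (simp add: algebra_simps)
    finally have "\<forall>w\<in>S. proj w \<phi> \<le> proj x \<phi>" using assms by auto
    then show "x \<in> frontier S" using max_frontier xS by blast
  qed
  then show False using no_boundary_segment \<open>p \<noteq> q\<close> by blast
qed

definition supp :: "real \<Rightarrow> real" where
  "supp \<phi> = Sup ((\<lambda>z. proj z \<phi>) ` S)"

definition supp_pt :: "real \<Rightarrow> complex" where
  "supp_pt \<phi> = (THE z. z \<in> S \<and> (\<forall>w\<in>S. proj w \<phi> \<le> proj z \<phi>))"

lemma supp_pt_prop: "supp_pt \<phi> \<in> S" "\<And>w. w \<in> S \<Longrightarrow> proj w \<phi> \<le> proj (supp_pt \<phi>) \<phi>"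
proof -
  obtain z where z: "z \<in> S" "\<forall>w\<in>S. proj w \<phi> \<le> proj z \<phi>" using max_exists by blast
  have "supp_pt \<phi> = z" unfolding supp_pt_def
    by (rule the_equality) (use z max_unique in auto)
  then show "supp_pt \<phi> \<in> S" "\<And>w. w \<in> S \<Longrightarrow> proj w \<phi> \<le> proj (supp_pt \<phi>) \<phi>" using z by auto
qed

lemma supp_pt_eq: "z \<in> S \<Longrightarrow> (\<And>w. w \<in> S \<Longrightarrow> proj w \<phi> \<le> proj z \<phi>) \<Longrightarrow> supp_pt \<phi> = z"
  using max_unique supp_pt_prop by blast

lemma supp_eq: "supp \<phi> = proj (supp_pt \<phi>) \<phi>"
  unfolding supp_def by (rule cSup_eq_maximum) (use supp_pt_prop in auto)

lemma supp_ge: "w \<in> S \<Longrightarrow> proj w \<phi> \<le> supp \<phi>"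
  using supp_pt_prop supp_eq by auto

lemma proj_le_supp: "proj (supp_pt b) a \<le> supp a"
  using supp_ge supp_pt_prop(1) by blast

lemma supp_pt_frontier: "supp_pt \<phi> \<in> frontier S"
  using max_frontier supp_pt_prop by blast

lemma supp_pt_periodic: "supp_pt (\<phi> + 2*pi) = supp_pt \<phi>"
  by (rule supp_pt_eq) (use supp_pt_prop in \<open>auto simp: proj_periodic\<close>)

lemma supp_periodic: "supp (\<phi> + 2*pi) = supp \<phi>"
  by (simp add: supp_eq supp_pt_periodic proj_periodic)

text \<open>The support point depends continuously on the direction: its graph is closed
  (an intersection of closed sets) and takes values in the compact set S.\<close>
lemma continuous_supp_pt: "continuous_on UNIV supp_pt"
proof (rule continuous_from_closed_graph[OF compact])
  show "supp_pt \<in> UNIV \<rightarrow> S" using supp_pt_prop by auto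
  define C where "C w = {p::real\<times>complex. snd p \<in> S \<and> proj w (fst p) \<le> proj (snd p) (fst p)}" for w
  have graph: "(\<lambda>x. (x, supp_pt x)) ` UNIV = (\<Inter>w\<in>S. C w)"
  proof (intro equalityI subsetI)
    fix p assume "p \<in> (\<lambda>x. (x, supp_pt x)) ` UNIV"
    then show "p \<in> (\<Inter>w\<in>S. C w)" unfolding C_def using supp_pt_prop by auto
  next
    fix p assume p: "p \<in> (\<Inter>w\<in>S. C w)"
    have "snd p \<in> S" using p nonempty unfolding C_def by blast
    moreover have "\<And>w. w \<in> S \<Longrightarrow> proj w (fst p) \<le> proj (snd p) (fst p)"
      using p unfolding C_def by blast
    ultimately have "supp_pt (fst p) = snd p" by (rule supp_pt_eq)
    then show "p \<in> (\<lambda>x. (x, supp_pt x)) ` UNIV" by (metis prod.collapse rangeI)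
  qed
  have "closed (C w)" for w
  proof -
    have "C w = (UNIV \<times> S) \<inter> {p. proj w (fst p) \<le> proj (snd p) (fst p)}"
      unfolding C_def by auto
    moreover have "closed {p::real\<times>complex. proj w (fst p) \<le> proj (snd p) (fst p)}"
      by (intro closed_Collect_le continuous_intros)
    ultimately show ?thesis using closed_Times[OF closed_UNIV compact_imp_closed[OF compact]]
      by (metis closed_Int)
  qed
  then show "closed ((\<lambda>x. (x, supp_pt x)) ` UNIV)" unfolding graph by (intro closed_INT) auto
qed

lemma continuous_supp: "continuous_on UNIV supp"
  unfolding supp_eq[abs_def] by (intro continuous_intros continuous_supp_pt)

lemma supp_integrable: "supp integrable_on {a..b}"
  by (rule integrable_continuous_real) (rule continuous_on_subset[OF continuous_supp], simp)

definition supp_deriv :: "real \<Rightarrow> real" where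
  "supp_deriv \<phi> = proj (supp_pt \<phi>) (\<phi> + pi/2)"

lemma continuous_supp_deriv: "continuous_on UNIV supp_deriv"
  unfolding supp_deriv_def[abs_def] by (intro continuous_intros continuous_supp_pt)

lemma supp_deriv_periodic: "supp_deriv (\<phi> + 2*pi) = supp_deriv \<phi>"
  using proj_periodic[of "supp_pt \<phi>" "\<phi> + pi/2"]
  by (simp add: supp_deriv_def supp_pt_periodic add_ac)

lemma proj_difference_quotient:
  assumes "(z \<longlongrightarrow> z0) (at (0::real))"
  shows "((\<lambda>h. (proj (z h) (\<phi> + h) - proj (z h) \<phi>) / h) \<longlongrightarrow> proj z0 (\<phi> + pi/2)) (at 0)"
proof -
  have c: "((\<lambda>h. (cos (\<phi> + h) - cos \<phi>) / h) \<longlongrightarrow> - sin \<phi>) (at 0)"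
    using DERIV_cos[of \<phi>] by (simp add: DERIV_def)
  have si: "((\<lambda>h. (sin (\<phi> + h) - sin \<phi>) / h) \<longlongrightarrow> cos \<phi>) (at 0)"
    using DERIV_sin[of \<phi>] by (simp add: DERIV_def)
  have eq: "(proj (z h) (\<phi> + h) - proj (z h) \<phi>) / h =
     Re (z h) * ((cos (\<phi> + h) - cos \<phi>) / h) + Im (z h) * ((sin (\<phi> + h) - sin \<phi>) / h)" for h
    by (simp add: proj_def diff_divide_distrib algebra_simps add_divide_distrib)
  have "((\<lambda>h. Re (z h) * ((cos (\<phi> + h) - cos \<phi>) / h) + Im (z h) * ((sin (\<phi> + h) - sin \<phi>) / h))
        \<longlongrightarrow> Re z0 * (- sin \<phi>) + Im z0 * cos \<phi>) (at 0)"
    by (intro tendsto_intros c si assms)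
  moreover have "Re z0 * (- sin \<phi>) + Im z0 * cos \<phi> = proj z0 (\<phi> + pi/2)"
    by (simp add: proj_perp)
  ultimately show ?thesis unfolding eq by simp
qed

text \<open>The support function is differentiable: its difference quotient is squeezed between
  those of the components along the two support points supp_pt phi and supp_pt (phi + h).\<close>
lemma has_derivative_supp: "(supp has_real_derivative supp_deriv \<phi>) (at \<phi>)"
  unfolding DERIV_def
proof (rule real_tendsto_sandwich)
  define A where "A h = (proj (supp_pt \<phi>) (\<phi> + h) - proj (supp_pt \<phi>) \<phi>) / h" for h
  define B where "B h = (proj (supp_pt (\<phi> + h)) (\<phi> + h) - proj (supp_pt (\<phi> + h)) \<phi>) / h" for h
  have squeeze: "min (A h) (B h) \<le> (supp (\<phi> + h) - supp \<phi>) / h \<and>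
      (supp (\<phi> + h) - supp \<phi>) / h \<le> max (A h) (B h)" for h
  proof -
    have l: "proj (supp_pt \<phi>) (\<phi> + h) - proj (supp_pt \<phi>) \<phi> \<le> supp (\<phi> + h) - supp \<phi>"
      using proj_le_supp[of \<phi> "\<phi> + h"] supp_eq[of \<phi>] by simp
    have u: "supp (\<phi> + h) - supp \<phi> \<le> proj (supp_pt (\<phi> + h)) (\<phi> + h) - proj (supp_pt (\<phi> + h)) \<phi>"
      using proj_le_supp[of "\<phi> + h" \<phi>] supp_eq[of "\<phi> + h"] by simp
    consider "h > 0" | "h = 0" | "h < 0" by linarith
    then show ?thesis
    proof cases
      case 1
      then have "A h \<le> (supp (\<phi> + h) - supp \<phi>) / h" "(supp (\<phi> + h) - supp \<phi>) / h \<le> B h"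
        using l u by (simp_all add: A_def B_def divide_right_mono)
      then show ?thesis by linarith
    next
      case 2 then show ?thesis by (simp add: A_def B_def)
    next
      case 3
      then have "B h \<le> (supp (\<phi> + h) - supp \<phi>) / h" "(supp (\<phi> + h) - supp \<phi>) / h \<le> A h"
        using l u by (simp_all add: A_def B_def divide_right_mono_neg)
      then show ?thesis by linarith
    qed
  qed
  then show "\<forall>\<^sub>F h in at 0. min (A h) (B h) \<le> (supp (\<phi> + h) - supp \<phi>) / h"
    and "\<forall>\<^sub>F h in at 0. (supp (\<phi> + h) - supp \<phi>) / h \<le> max (A h) (B h)" by simp_all
  have A: "A \<midarrow>0\<rightarrow> supp_deriv \<phi>" unfolding A_def supp_deriv_def by (rule proj_difference_quotient) simp
  have "isCont supp_pt \<phi>" using continuous_supp_pt by (simp add: continuous_on_eq_continuous_at)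
  then have "(\<lambda>h. supp_pt (\<phi> + h)) \<midarrow>0\<rightarrow> supp_pt \<phi>" by (intro LIM_offset_zero) (simp add: isCont_def)
  then have B: "B \<midarrow>0\<rightarrow> supp_deriv \<phi>" unfolding B_def supp_deriv_def by (rule proj_difference_quotient)
  show "((\<lambda>h. min (A h) (B h)) \<longlongrightarrow> supp_deriv \<phi>) (at 0)" using tendsto_min[OF A B] by simp
  show "((\<lambda>h. max (A h) (B h)) \<longlongrightarrow> supp_deriv \<phi>) (at 0)" using tendsto_max[OF A B] by simp
qed

text \<open>Being a derivative of a periodic function, supp_deriv integrates to 0 over a period.\<close>
lemma supp_deriv_integral: "(supp_deriv has_integral 0) {0..2*pi}"
proof -
  have "(supp_deriv has_integral (supp (2*pi) - supp 0)) {0..2*pi}"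
    by (rule fundamental_theorem_of_calculus)
       (auto intro!: has_field_derivative_at_within[OF has_derivative_supp]
             simp: has_real_derivative_iff_has_vector_derivative[symmetric])
  then show ?thesis using supp_periodic[of 0] by simp
qed

text \<open>The integral of the support function over a full turn; Cauchy's formula identifies it
  with the perimeter.\<close>
definition supp_integral :: real where
  "supp_integral = integral {0..2*pi} supp"

text \<open>Length of the boundary arc from supp_pt a to supp_pt b (for a <= b), in the form
  given by the support function: supp' b - supp' a + integral of supp over [a, b].\<close>
definition arc_len :: "real \<Rightarrow> real \<Rightarrow> real" where
  "arc_len a b = supp_deriv b - supp_deriv a + integral {a..b} supp"

lemma arc_len_add: "a \<le> c \<Longrightarrow> c \<le> b \<Longrightarrow> arc_len a c + arc_len c b = arc_len a b"
  unfolding arc_len_def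
  using Henstock_Kurzweil_Integration.integral_combine[where a=a and c=c and b=b and f=supp] supp_integrable
  by simp

lemma arc_len_telescope:
  assumes "\<forall>i<n. a i \<le> a (Suc i)"
  shows "(\<Sum>i<n. arc_len (a i) (a (Suc i))) = arc_len (a 0) (a n)"
  using assms
proof (induction n)
  case 0 then show ?case by (simp add: arc_len_def)
next
  case (Suc n)
  have "(\<Sum>i<Suc n. arc_len (a i) (a (Suc i))) = arc_len (a 0) (a n) + arc_len (a n) (a (Suc n))"
    using Suc by simp
  also have "\<dots> = arc_len (a 0) (a (Suc n))"
    using chain_mono[OF Suc.prems, of 0 n] Suc.prems by (intro arc_len_add) auto
  finally show ?case .
qed

lemma arc_len_period: "arc_len a (a + 2*pi) = supp_integral"
  unfolding arc_len_def supp_integral_def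
  using supp_deriv_periodic[of a] period_integral[OF continuous_supp supp_periodic, of a] by simp

text \<open>Every component of a chord is bounded by the arc length: comparing supp with the
  components along supp_pt a on [a, m] and along supp_pt b on [m, b].\<close>
lemma arc_len_ge_proj:
  assumes "a \<le> m" "m \<le> b"
  shows "proj (supp_pt b - supp_pt a) (m + pi/2) \<le> arc_len a b"
proof -
  have i1: "integral {a..m} (\<lambda>\<phi>. proj (supp_pt a) \<phi>) \<le> integral {a..m} supp"
    by (rule integral_le) (use proj_has_integral[OF assms(1)] supp_integrable proj_le_supp in auto)
  have i2: "integral {m..b} (\<lambda>\<phi>. proj (supp_pt b) \<phi>) \<le> integral {m..b} supp"
    by (rule integral_le) (use proj_has_integral[OF assms(2)] supp_integrable proj_le_supp in auto)
  have e1: "integral {a..m} (\<lambda>\<phi>. proj (supp_pt a) \<phi>) = proj (supp_pt a) (a + pi/2) - proj (supp_pt a) (m + pi/2)"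
    using proj_has_integral[OF assms(1)] by (rule integral_unique)
  have e2: "integral {m..b} (\<lambda>\<phi>. proj (supp_pt b) \<phi>) = proj (supp_pt b) (m + pi/2) - proj (supp_pt b) (b + pi/2)"
    using proj_has_integral[OF assms(2)] by (rule integral_unique)
  have "integral {a..b} supp = integral {a..m} supp + integral {m..b} supp"
    using Henstock_Kurzweil_Integration.integral_combine[where a=a and c=m and b=b and f=supp]
      supp_integrable assms
    by simp
  then show ?thesis using i1 i2 e1 e2 unfolding arc_len_def supp_deriv_def proj_diff by linarith
qed

text \<open>The chord bound for normal angles at most pi apart: the chord is normal to some
  intermediate direction m, where arc_len_ge_proj applies.\<close>
lemma chord_le_small:
  assumes ab: "a \<le> b" "b \<le> a + pi"
  shows "norm (supp_pt b - supp_pt a) \<le> arc_len a b"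
proof (cases "supp_pt b = supp_pt a")
  case True
  then show ?thesis using arc_len_ge_proj[of a a b] ab by (simp add: proj_def)
next
  case False
  then have "a \<noteq> b" by blast
  then have "a < b" using ab by simp
  moreover have "proj (supp_pt b - supp_pt a) a \<le> 0"
    using proj_le_supp[of b a] supp_eq[of a] by (simp add: proj_diff)
  moreover have "0 \<le> proj (supp_pt b - supp_pt a) b"
    using proj_le_supp[of a b] supp_eq[of b] by (simp add: proj_diff)
  ultimately obtain m where "a \<le> m" "m \<le> b" "proj (supp_pt b - supp_pt a) (m + pi/2) = norm (supp_pt b - supp_pt a)"
    using chord_normal_between[of "supp_pt b - supp_pt a" a b] False ab by auto
  then show ?thesis using arc_len_ge_proj by metis
qed

lemma chord_le:
  assumes ab: "a \<le> b" "b \<le> a + 2*pi"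
  shows "norm (supp_pt b - supp_pt a) \<le> arc_len a b"
proof -
  define c where "c = (a + b) / 2"
  have c: "a \<le> c" "c \<le> b" "c \<le> a + pi" "b \<le> c + pi" using ab by (simp_all add: c_def field_simps)
  have "norm (supp_pt b - supp_pt a) \<le> norm (supp_pt c - supp_pt a) + norm (supp_pt b - supp_pt c)"
    using norm_triangle_ineq[of "supp_pt c - supp_pt a" "supp_pt b - supp_pt c"] by simp
  also have "\<dots> \<le> arc_len a c + arc_len c b" using chord_le_small c by (intro add_mono) auto
  also have "\<dots> = arc_len a b" using arc_len_add c by simp
  finally show ?thesis .
qed

text \<open>Between two directions less than pi apart, supp is dominated by the sine interpolation of its
  endpoint values (evaluate the components along supp_pt phi).\<close>
lemma supp_interp:
  assumes "a \<le> \<phi>" "\<phi> \<le> b" "b - a < pi"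
  shows "sin (b - a) * supp \<phi> \<le> sin (b - \<phi>) * supp a + sin (\<phi> - a) * supp b"
proof -
  let ?z = "supp_pt \<phi>"
  have id: "sin (b - a) * proj ?z \<phi> = sin (b - \<phi>) * proj ?z a + sin (\<phi> - a) * proj ?z b"
    by (simp add: proj_def sin_diff cos_diff algebra_simps)
  have w: "sin (b - \<phi>) \<ge> 0" "sin (\<phi> - a) \<ge> 0" using assms by (auto intro!: sin_ge_zero)
  have "sin (b - \<phi>) * proj ?z a \<le> sin (b - \<phi>) * supp a" using w proj_le_supp by (intro mult_left_mono) auto
  moreover have "sin (\<phi> - a) * proj ?z b \<le> sin (\<phi> - a) * supp b" using w proj_le_supp by (intro mult_left_mono) auto
  moreover have "sin (b - a) * supp \<phi> = sin (b - a) * proj ?z \<phi>" using supp_eq by simp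
  ultimately show ?thesis using id by linarith
qed

lemma supp_integral_le_ends:
  assumes ab: "a < b" "b - a < pi"
  shows "cos ((b - a)/2) * integral {a..b} supp \<le> sin ((b - a)/2) * (supp a + supp b)"
proof -
  define h where "h = (b - a)/2"
  have "sin h > 0" using ab by (simp add: h_def sin_gt_zero)
  have int1: "((\<lambda>\<phi>. sin (b - a) * supp \<phi>) has_integral sin (b - a) * integral {a..b} supp) {a..b}"
    using supp_integrable by (intro has_integral_mult_right integrable_integral)
  have int2: "((\<lambda>\<phi>. sin (b - \<phi>) * supp a + sin (\<phi> - a) * supp b) has_integral
        ((1 - cos (b - a)) * supp a + (1 - cos (b - a)) * supp b)) {a..b}"
    using ab by (intro has_integral_add has_integral_mult_left sin_diff_left_has_integral
        sin_diff_right_has_integral) auto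
  have "sin (b - a) * integral {a..b} supp \<le> (1 - cos (b - a)) * supp a + (1 - cos (b - a)) * supp b"
    by (rule has_integral_le[OF int1 int2]) (use supp_interp ab in auto)
  moreover have "b - a = 2 * h" by (simp add: h_def)
  then have "sin (b - a) = 2 * sin h * cos h" "1 - cos (b - a) = 2 * sin h * sin h"
    using sin_double[of h] cos_double_sin[of h] by (simp_all add: power2_eq_square)
  ultimately have "2 * sin h * (cos h * integral {a..b} supp) \<le> 2 * sin h * (sin h * (supp a + supp b))"
    by (simp add: algebra_simps)
  then show ?thesis using \<open>sin h > 0\<close> by (simp add: h_def)
qed

text \<open>Lower chord bound: for directions less than pi apart, the chord is at least
  cos ((b - a)/2) times the arc (project onto the middle direction).\<close>
lemma chord_ge:
  assumes ab: "a < b" "b - a < pi"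
  shows "cos ((b - a)/2) * arc_len a b \<le> norm (supp_pt b - supp_pt a)"
proof -
  define h where "h = (b - a)/2"
  define m where "m = (a + b)/2"
  have hm: "b = m + h" "a = m - h" by (simp_all add: h_def m_def field_simps)
  have "cos h * arc_len a b = cos h * supp_deriv b - cos h * supp_deriv a + cos h * integral {a..b} supp"
    by (simp add: arc_len_def algebra_simps)
  also have "\<dots> \<le> (cos h * supp_deriv b + sin h * supp b) - (cos h * supp_deriv a - sin h * supp a)"
    using supp_integral_le_ends[OF ab] by (simp add: h_def algebra_simps)
  also have "\<dots> = proj (supp_pt b) (m + pi/2) - proj (supp_pt a) (m + pi/2)"
    unfolding supp_deriv_def supp_eq hm
    using proj_rotate_frame[of h _ "m + h"] proj_rotate_frame[of "-h" _ "m - h"] by simp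
  also have "\<dots> = proj (supp_pt b - supp_pt a) (m + pi/2)" by (simp add: proj_diff)
  also have "\<dots> \<le> norm (supp_pt b - supp_pt a)" by (rule proj_le_norm)
  finally show ?thesis by (simp add: h_def)
qed

end

lemma wedge_iff:
  assumes sin: "sin \<alpha> > 0"
  shows "z \<in> wedge \<alpha> \<longleftrightarrow> proj z (-(pi/2)) \<le> 0 \<and> proj z (\<alpha> + pi/2) \<le> 0"
proof
  assume "z \<in> wedge \<alpha>"
  then obtain a b where ab: "a \<ge> 0" "b \<ge> 0" "z = complex_of_real a + complex_of_real b * cis \<alpha>"
    by (auto simp: wedge_def)
  have "Im z = b * sin \<alpha>" "Re z = a + b * cos \<alpha>" using ab by auto
  then show "proj z (-(pi/2)) \<le> 0 \<and> proj z (\<alpha> + pi/2) \<le> 0"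
    using ab sin by (simp add: proj_down proj_perp algebra_simps)
next
  assume h: "proj z (-(pi/2)) \<le> 0 \<and> proj z (\<alpha> + pi/2) \<le> 0"
  define b where "b = Im z / sin \<alpha>"
  define a where "a = Re z - b * cos \<alpha>"
  have b0: "b \<ge> 0" using h sin by (simp add: b_def proj_down)
  have "a * sin \<alpha> = Re z * sin \<alpha> - Im z * cos \<alpha>"
    using sin by (simp add: a_def b_def field_simps)
  then have "a * sin \<alpha> \<ge> 0" using h by (simp add: proj_perp)
  then have a0: "a \<ge> 0" using sin by (simp add: zero_le_mult_iff)
  have "z = complex_of_real a + complex_of_real b * cis \<alpha>"
    using sin by (simp add: complex_eq_iff a_def b_def)
  then show "z \<in> wedge \<alpha>" using a0 b0 unfolding wedge_def by blast
qed

lemma ray0_iff: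
  assumes sin: "sin \<alpha> > 0" and w: "z \<in> wedge \<alpha>"
  shows "z \<in> ray 0 \<longleftrightarrow> proj z (-(pi/2)) = 0"
proof
  assume "z \<in> ray 0" then show "proj z (-(pi/2)) = 0" by (auto simp: ray_def proj_down)
next
  assume "proj z (-(pi/2)) = 0"
  then have "Im z = 0" by (simp add: proj_down)
  moreover have "proj z (\<alpha> + pi/2) \<le> 0" using w wedge_iff[OF sin] by blast
  ultimately have "Re z * sin \<alpha> \<ge> 0" by (simp add: proj_perp)
  then have "Re z \<ge> 0" using sin by (simp add: zero_le_mult_iff)
  then have "z = complex_of_real (Re z) * cis 0" using \<open>Im z = 0\<close> by (simp add: complex_eq_iff)
  then show "z \<in> ray 0" unfolding ray_def using \<open>Re z \<ge> 0\<close> by blast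
qed

lemma ray_alpha_iff:
  assumes sin: "sin \<alpha> > 0" and w: "z \<in> wedge \<alpha>"
  shows "z \<in> ray \<alpha> \<longleftrightarrow> proj z (\<alpha> + pi/2) = 0"
proof
  assume "z \<in> ray \<alpha>" then show "proj z (\<alpha> + pi/2) = 0" by (auto simp: ray_def proj_perp)
next
  assume h: "proj z (\<alpha> + pi/2) = 0"
  have "Im z \<ge> 0" using w wedge_iff[OF sin] by (simp add: proj_down)
  define r where "r = Im z / sin \<alpha>"
  have "r \<ge> 0" using \<open>Im z \<ge> 0\<close> sin by (simp add: r_def)
  have "Im z * cos \<alpha> = Re z * sin \<alpha>" using h by (simp add: proj_perp)
  then have "z = complex_of_real r * cis \<alpha>"
    using sin by (simp add: complex_eq_iff r_def field_simps)
  then show "z \<in> ray \<alpha>" unfolding ray_def using \<open>r \<ge> 0\<close> by blast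
qed

lemma eq_by_wedge_components:
  assumes sin: "sin \<alpha> > 0"
    and "proj t (-(pi/2)) = proj t' (-(pi/2))" "proj t (\<alpha> + pi/2) = proj t' (\<alpha> + pi/2)"
  shows "t = t'"
proof -
  have "Im t = Im t'" using assms(2) by (simp add: proj_down)
  moreover have "Re t * sin \<alpha> = Re t' * sin \<alpha>"
    using assms(3) unfolding proj_perp \<open>Im t = Im t'\<close> by simp
  then have "Re t = Re t'" using sin by simp
  ultimately show ?thesis by (simp add: complex_eq_iff)
qed

locale wedge_placement = strictly_convex_set +
  fixes \<alpha> :: real
  assumes alpha_pos: "0 < \<alpha>" and alpha_less_pi: "\<alpha> < pi"
begin

lemma sin_alpha_pos: "sin \<alpha> > 0"
  using alpha_pos alpha_less_pi sin_gt_zero by blast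

lemma proj_img: "proj (t + cis \<theta> * w) a = proj t a + proj w (a - \<theta>)"
  by (simp add: proj_add proj_rot)

lemma img_wedge_iff:
  "(\<lambda>z. t + cis \<theta> * z) ` S \<subseteq> wedge \<alpha> \<longleftrightarrow>
     proj t (-(pi/2)) + supp (-(pi/2) - \<theta>) \<le> 0 \<and> proj t (\<alpha> + pi/2) + supp (\<alpha> + pi/2 - \<theta>) \<le> 0"
proof
  assume h: "(\<lambda>z. t + cis \<theta> * z) ` S \<subseteq> wedge \<alpha>"
  have "t + cis \<theta> * supp_pt (-(pi/2) - \<theta>) \<in> wedge \<alpha>" "t + cis \<theta> * supp_pt (\<alpha> + pi/2 - \<theta>) \<in> wedge \<alpha>"
    using h supp_pt_prop(1) by auto
  then show "proj t (-(pi/2)) + supp (-(pi/2) - \<theta>) \<le> 0 \<and> proj t (\<alpha> + pi/2) + supp (\<alpha> + pi/2 - \<theta>) \<le> 0"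
    unfolding wedge_iff[OF sin_alpha_pos] proj_img supp_eq by simp
next
  assume h: "proj t (-(pi/2)) + supp (-(pi/2) - \<theta>) \<le> 0 \<and> proj t (\<alpha> + pi/2) + supp (\<alpha> + pi/2 - \<theta>) \<le> 0"
  show "(\<lambda>z. t + cis \<theta> * z) ` S \<subseteq> wedge \<alpha>"
  proof
    fix y assume "y \<in> (\<lambda>z. t + cis \<theta> * z) ` S"
    then obtain w where w: "w \<in> S" "y = t + cis \<theta> * w" by blast
    have "proj w (-(pi/2) - \<theta>) \<le> supp (-(pi/2) - \<theta>)" "proj w (\<alpha> + pi/2 - \<theta>) \<le> supp (\<alpha> + pi/2 - \<theta>)"
      using supp_ge w by auto
    then show "y \<in> wedge \<alpha>" unfolding wedge_iff[OF sin_alpha_pos] w(2) proj_img using h by simp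
  qed
qed

lemma touching_eq:
  assumes "proj t \<psi> + supp (\<psi> - \<theta>) \<le> 0" "w \<in> S" "proj (t + cis \<theta> * w) \<psi> = 0"
  shows "proj t \<psi> = - supp (\<psi> - \<theta>)"
  using supp_ge[OF assms(2), of "\<psi> - \<theta>"] assms(1,3) unfolding proj_img by linarith

text \<open>The translation vector of S_theta: both support inequalities are equalities.\<close>
definition offset :: "real \<Rightarrow> complex" where
  "offset \<theta> = Complex ((supp (\<alpha> + pi/2 - \<theta>) + supp (-(pi/2) - \<theta>) * cos \<alpha>) / sin \<alpha>)
                      (supp (-(pi/2) - \<theta>))"

lemma offset_proj_down: "proj (offset \<theta>) (-(pi/2)) = - supp (-(pi/2) - \<theta>)"
  by (simp add: offset_def proj_down)

lemma offset_proj_perp: "proj (offset \<theta>) (\<alpha> + pi/2) = - supp (\<alpha> + pi/2 - \<theta>)"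
  using sin_alpha_pos unfolding proj_perp by (simp add: offset_def field_simps)

lemma offset_in_wedge: "(\<lambda>z. offset \<theta> + cis \<theta> * z) ` S \<subseteq> wedge \<alpha>"
  unfolding img_wedge_iff by (simp add: offset_proj_down offset_proj_perp)

lemma offset_touch_ray0: "offset \<theta> + cis \<theta> * supp_pt (-(pi/2) - \<theta>) \<in> ray 0"
  using offset_in_wedge supp_pt_prop(1)
  by (subst ray0_iff[OF sin_alpha_pos]) (auto simp: proj_img offset_proj_down supp_eq)

lemma offset_touch_ray_alpha: "offset \<theta> + cis \<theta> * supp_pt (\<alpha> + pi/2 - \<theta>) \<in> ray \<alpha>"
  using offset_in_wedge supp_pt_prop(1)
  by (subst ray_alpha_iff[OF sin_alpha_pos]) (auto simp: proj_img offset_proj_perp supp_eq)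

lemma touching_offset_unique:
  assumes sub: "(\<lambda>z. t + cis \<theta> * z) ` S \<subseteq> wedge \<alpha>"
    and y1: "y1 \<in> (\<lambda>z. t + cis \<theta> * z) ` S" "y1 \<in> ray 0"
    and y2: "y2 \<in> (\<lambda>z. t + cis \<theta> * z) ` S" "y2 \<in> ray \<alpha>"
  shows "t = offset \<theta>"
proof (rule eq_by_wedge_components[OF sin_alpha_pos])
  have le: "proj t (-(pi/2)) + supp (-(pi/2) - \<theta>) \<le> 0" "proj t (\<alpha> + pi/2) + supp (\<alpha> + pi/2 - \<theta>) \<le> 0"
    using sub img_wedge_iff by auto
  obtain w1 where w1: "w1 \<in> S" "y1 = t + cis \<theta> * w1" using y1 by blast
  have "proj y1 (-(pi/2)) = 0" using y1 sub ray0_iff[OF sin_alpha_pos] by blast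
  then show "proj t (-(pi/2)) = proj (offset \<theta>) (-(pi/2))"
    using touching_eq[OF le(1) w1(1)] w1(2) by (simp add: offset_proj_down)
  obtain w2 where w2: "w2 \<in> S" "y2 = t + cis \<theta> * w2" using y2 by blast
  have "proj y2 (\<alpha> + pi/2) = 0" using y2 sub ray_alpha_iff[OF sin_alpha_pos] by blast
  then show "proj t (\<alpha> + pi/2) = proj (offset \<theta>) (\<alpha> + pi/2)"
    using touching_eq[OF le(2) w2(1)] w2(2) by (simp add: offset_proj_perp)
qed

lemma placed_eq: "placed S \<alpha> \<theta> = (\<lambda>z. offset \<theta> + cis \<theta> * z) ` S"
  unfolding placed_def
proof (rule the_equality)
  let ?T = "(\<lambda>z. offset \<theta> + cis \<theta> * z) ` S"
  have "offset \<theta> + cis \<theta> * supp_pt (-(pi/2) - \<theta>) \<in> ?T \<inter> ray 0"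
    "offset \<theta> + cis \<theta> * supp_pt (\<alpha> + pi/2 - \<theta>) \<in> ?T \<inter> ray \<alpha>"
    using supp_pt_prop(1) offset_touch_ray0 offset_touch_ray_alpha by auto
  then show "\<exists>t. ?T = (\<lambda>z. t + cis \<theta> * z) ` S \<and> ?T \<subseteq> wedge \<alpha> \<and> ?T \<inter> ray 0 \<noteq> {} \<and> ?T \<inter> ray \<alpha> \<noteq> {}"
    using offset_in_wedge by blast
next
  fix T assume "\<exists>t. T = (\<lambda>z. t + cis \<theta> * z) ` S \<and> T \<subseteq> wedge \<alpha> \<and> T \<inter> ray 0 \<noteq> {} \<and> T \<inter> ray \<alpha> \<noteq> {}"
  then obtain t y1 y2 where "T = (\<lambda>z. t + cis \<theta> * z) ` S" "T \<subseteq> wedge \<alpha>"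
    "y1 \<in> T" "y1 \<in> ray 0" "y2 \<in> T" "y2 \<in> ray \<alpha>"
    by blast
  then show "T = (\<lambda>z. offset \<theta> + cis \<theta> * z) ` S" using touching_offset_unique by metis
qed

lemma Ypt_eq: "Ypt S \<alpha> \<theta> = offset \<theta> + cis \<theta> * supp_pt (\<alpha> + pi/2 - \<theta>)"
  unfolding Ypt_def
proof (rule the_equality)
  show "offset \<theta> + cis \<theta> * supp_pt (\<alpha> + pi/2 - \<theta>) \<in> placed S \<alpha> \<theta> \<inter> ray \<alpha>"
    using supp_pt_prop(1) offset_touch_ray_alpha placed_eq by auto
next
  fix y assume y: "y \<in> placed S \<alpha> \<theta> \<inter> ray \<alpha>"
  then obtain w where w: "w \<in> S" "y = offset \<theta> + cis \<theta> * w" using placed_eq by auto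
  have "y \<in> wedge \<alpha>" using offset_in_wedge w by auto
  then have "proj y (\<alpha> + pi/2) = 0" using y ray_alpha_iff[OF sin_alpha_pos] by blast
  then have "proj w (\<alpha> + pi/2 - \<theta>) = supp (\<alpha> + pi/2 - \<theta>)"
    using w by (simp add: proj_img offset_proj_perp)
  then have "supp_pt (\<alpha> + pi/2 - \<theta>) = w" using w(1) supp_ge by (intro supp_pt_eq) auto
  then show "y = offset \<theta> + cis \<theta> * supp_pt (\<alpha> + pi/2 - \<theta>)" using w by simp
qed

lemma fdist_eq:
  "fdist S \<alpha> \<theta> = (supp (-(pi/2) - \<theta>) + cos \<alpha> * supp (\<alpha> + pi/2 - \<theta>)) / sin \<alpha> - supp_deriv (\<alpha> + pi/2 - \<theta>)"
proof -
  define \<phi> where "\<phi> = \<alpha> + pi/2 - \<theta>"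
  define Y where "Y = offset \<theta> + cis \<theta> * supp_pt \<phi>"
  have fY: "fdist S \<alpha> \<theta> = norm Y" unfolding fdist_def Ypt_eq Y_def \<phi>_def ..
  obtain r where r: "r \<ge> 0" "Y = complex_of_real r * cis \<alpha>"
    using offset_touch_ray_alpha[of \<theta>] unfolding Y_def \<phi>_def ray_def by blast
  have nY: "norm Y = Im Y / sin \<alpha>" using r sin_alpha_pos by (simp add: norm_mult)
  have "Im Y = - proj Y (-(pi/2))" by (simp add: proj_down)
  also have "\<dots> = supp (-(pi/2) - \<theta>) - proj (supp_pt \<phi>) (\<phi> - \<alpha> - pi)"
    unfolding Y_def proj_img offset_proj_down by (simp add: \<phi>_def)
  finally have "Im Y = supp (-(pi/2) - \<theta>) + cos \<alpha> * supp \<phi> - sin \<alpha> * supp_deriv \<phi>"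
    unfolding proj_shift_alpha supp_deriv_def supp_eq[of \<phi>] by simp
  then show ?thesis unfolding fY nY using sin_alpha_pos by (simp add: field_simps \<phi>_def)
qed

text \<open>Integrating the closed formula: each support term integrates to supp_integral and the
  derivative term to 0.\<close>
lemma fdist_integral:
  "(fdist S \<alpha> has_integral supp_integral * (1 + cos \<alpha>) / sin \<alpha>) {0..2*pi}"
proof -
  have h1: "((\<lambda>\<theta>. supp (-(pi/2) - \<theta>)) has_integral supp_integral) {0..2*pi}"
    unfolding supp_integral_def by (rule reflect_period_has_integral[OF continuous_supp supp_periodic])
  have h2: "((\<lambda>\<theta>. supp (\<alpha> + pi/2 - \<theta>)) has_integral supp_integral) {0..2*pi}"
    unfolding supp_integral_def by (rule reflect_period_has_integral[OF continuous_supp supp_periodic])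
  have w: "((\<lambda>\<theta>. supp_deriv (\<alpha> + pi/2 - \<theta>)) has_integral 0) {0..2*pi}"
    using reflect_period_has_integral[OF continuous_supp_deriv supp_deriv_periodic] supp_deriv_integral
    by (metis integral_unique)
  have "((\<lambda>\<theta>. (supp (-(pi/2) - \<theta>) + cos \<alpha> * supp (\<alpha> + pi/2 - \<theta>)) / sin \<alpha> - supp_deriv (\<alpha> + pi/2 - \<theta>))
      has_integral (supp_integral + cos \<alpha> * supp_integral) / sin \<alpha> - 0) {0..2*pi}"
    by (intro has_integral_diff has_integral_divide has_integral_add has_integral_mult_right h1 h2 w)
  moreover have "fdist S \<alpha> = (\<lambda>\<theta>. (supp (-(pi/2) - \<theta>) + cos \<alpha> * supp (\<alpha> + pi/2 - \<theta>)) / sin \<alpha>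
      - supp_deriv (\<alpha> + pi/2 - \<theta>))"
    using fdist_eq by (auto simp: fun_eq_iff)
  ultimately show ?thesis by (simp add: algebra_simps)
qed

end

text \<open>In a closed convex set with an interior point c, each ray from c meets the boundary at most once:
  points strictly between c and a boundary point are interior.\<close>
lemma convex_radial_unique:
  fixes S :: "complex set"
  assumes S: "convex S" "closed S" and c: "c \<in> interior S"
    and z1: "z1 \<in> frontier S" and z2: "z2 \<in> frontier S"
    and l: "l > 0" and eq: "z1 - c = complex_of_real l * (z2 - c)"
  shows "z1 = z2"
proof -
  have inner: False if w: "w1 \<in> frontier S" "w2 \<in> frontier S" "0 < k" "k < 1"
      "w1 - c = complex_of_real k * (w2 - c)" for w1 w2 k
  proof -
    have "w2 \<in> closure S" using w(2) by (auto simp: frontier_def)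
    then have "w2 - (1 - k) *\<^sub>R (w2 - c) \<in> interior S"
      using mem_interior_closure_convex_shrink[OF S(1) c, of w2 "1 - k"] w by auto
    moreover have "w1 = w2 - (1 - k) *\<^sub>R (w2 - c)"
      using w(5) by (simp add: scaleR_conv_of_real algebra_simps)
    ultimately show False using w(1) by (auto simp: frontier_def)
  qed
  consider "l < 1" | "l = 1" | "l > 1" by linarith
  then show ?thesis
  proof cases
    case 1 then show ?thesis using inner[OF z1 z2 l _ eq] by simp
  next
    case 2 then show ?thesis using eq by simp
  next
    case 3
    have "z2 - c = complex_of_real (1/l) * (z1 - c)" using eq l by simp
    then show ?thesis using inner[OF z2 z1, of "1/l"] 3 by simp
  qed
qed

text \<open>Arithmetic core of the local monotonicity of the polar angle: for a rotation by a small
  angle Delta (s = sin Delta, co = cos Delta) the cross product h q - w p stays nonnegative,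
  given the normal component h >= delta, the tangential component |w| <= D,
  D s <= delta co, and the support inequalities p <= 0 <= p co + q s.\<close>
lemma small_rotation_cross_nonneg:
  fixes h w p q s co \<delta> D :: real
  assumes p: "p \<le> 0" and pq: "0 \<le> p * co + q * s" and h: "\<delta> \<le> h" and w: "\<bar>w\<bar> \<le> D"
    and small: "D * s \<le> \<delta> * co" and s: "0 < s" and co: "0 < co"
  shows "0 \<le> h * q - w * p"
proof -
  have pc: "0 \<le> - p * co" using p co by (simp add: mult_nonpos_nonneg)
  have q: "0 \<le> q"
  proof (rule ccontr)
    assume "\<not> 0 \<le> q"
    then have "q * s < 0" using s by (simp add: mult_neg_pos)
    then show False using pq pc by linarith
  qed
  have wh: "\<bar>w\<bar> * s \<le> h * co"
  proof -
    have "\<bar>w\<bar> * s \<le> D * s" using w s by (intro mult_right_mono) auto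
    also have "\<dots> \<le> \<delta> * co" by (rule small)
    also have "\<dots> \<le> h * co" using h co by (intro mult_right_mono) auto
    finally show ?thesis .
  qed
  have 1: "\<bar>w\<bar> * (- p * co) \<le> \<bar>w\<bar> * (q * s)" using pq by (intro mult_left_mono) auto
  have 2: "- \<bar>w\<bar> * (- p * co) \<le> w * (- p * co)" using pc by (intro mult_right_mono) auto
  have 3: "q * (\<bar>w\<bar> * s) \<le> q * (h * co)" using wh q by (intro mult_left_mono) auto
  have "0 \<le> q * (h * co) + w * (- p * co)" using 1 2 3 by (simp add: algebra_simps)
  also have "\<dots> = co * (h * q - w * p)" by (simp add: algebra_simps)
  finally show ?thesis using co by (simp add: zero_le_mult_iff)
qed

text \<open>Then the polar angle about c of the support point supp_pt phi is a continuous nondecreasing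
  function of the normal angle phi, and it has a right inverse normal_at.\<close>
locale interior_ball = strictly_convex_set +
  fixes c :: complex and \<delta> D :: real
  assumes delta_pos: "\<delta> > 0" and ball_subset: "cball c \<delta> \<subseteq> S"
    and D_ge_1: "D \<ge> 1" and D_bound: "\<And>z. z \<in> S \<Longrightarrow> norm (z - c) \<le> D"
begin

lemma c_interior: "c \<in> interior S"
  using ball_subset delta_pos mem_interior_cball by blast

lemma frontier_ne_c: "z \<in> frontier S \<Longrightarrow> z \<noteq> c"
  using c_interior by (auto simp: frontier_def)

lemma radial_unique:
  "z1 \<in> frontier S \<Longrightarrow> z2 \<in> frontier S \<Longrightarrow> l > 0 \<Longrightarrow> z1 - c = complex_of_real l * (z2 - c) \<Longrightarrow> z1 = z2"
  using convex_radial_unique[OF convex compact_imp_closed[OF compact] c_interior] by blast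

lemma supp_margin: "supp \<phi> - proj c \<phi> \<ge> \<delta>"
proof -
  have "c + complex_of_real \<delta> * cis \<phi> \<in> cball c \<delta>" using delta_pos by (simp add: dist_norm norm_mult)
  then have "proj (c + complex_of_real \<delta> * cis \<phi>) \<phi> \<le> supp \<phi>" using ball_subset supp_ge by blast
  then show ?thesis by (simp add: proj_add proj_scale proj_cis)
qed

text \<open>Coordinates of supp_pt phi - c in the frame rotated by phi; the normal coordinate is
  at least delta, so the polar angle can be taken as phi plus an arctangent.\<close>
definition frame :: "real \<Rightarrow> complex" where
  "frame \<phi> = (supp_pt \<phi> - c) * cis (- \<phi>)"

lemma Re_frame: "Re (frame \<phi>) = proj (supp_pt \<phi> - c) \<phi>"
  by (simp add: frame_def proj_def)

lemma Re_frame_ge: "Re (frame \<phi>) \<ge> \<delta>"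
  using supp_margin[of \<phi>] by (simp add: Re_frame proj_diff supp_eq)

lemma norm_frame: "norm (frame \<phi>) = norm (supp_pt \<phi> - c)"
  by (simp add: frame_def norm_mult)

lemma continuous_frame: "continuous_on UNIV frame"
  unfolding frame_def[abs_def] by (intro continuous_intros continuous_supp_pt)

lemma frame_periodic: "frame (\<phi> + 2*pi) = frame \<phi>"
proof -
  have "cis (- (\<phi> + 2*pi)) = cis (-\<phi>) * cis (-(2*pi))" by (simp add: cis_mult)
  moreover have "cis (-(2*pi)) = 1" by (simp add: complex_eq_iff)
  ultimately show ?thesis unfolding frame_def supp_pt_periodic by simp
qed

definition polar_arg :: "real \<Rightarrow> real" where
  "polar_arg \<phi> = \<phi> + arctan (Im (frame \<phi>) / Re (frame \<phi>))"

lemma supp_pt_polar: "supp_pt \<phi> - c = complex_of_real (norm (supp_pt \<phi> - c)) * cis (polar_arg \<phi>)"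
proof -
  have "Re (frame \<phi>) > 0" using Re_frame_ge[of \<phi>] delta_pos by linarith
  then have "frame \<phi> = complex_of_real (norm (frame \<phi>)) * cis (arctan (Im (frame \<phi>) / Re (frame \<phi>)))"
    by (rule polar_arctan)
  then have "frame \<phi> * cis \<phi> = complex_of_real (norm (supp_pt \<phi> - c)) * cis (polar_arg \<phi>)"
    by (simp add: norm_frame polar_arg_def cis_mult[symmetric] mult.commute mult.left_commute)
  moreover have "frame \<phi> * cis \<phi> = supp_pt \<phi> - c" by (simp add: frame_def mult.assoc cis_mult)
  ultimately show ?thesis by simp
qed

lemma supp_pt_ne_c: "norm (supp_pt \<phi> - c) > 0"
  using norm_frame[of \<phi>] Re_frame_ge[of \<phi>] delta_pos abs_Re_le_cmod[of "frame \<phi>"] by linarith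

lemma continuous_polar_arg: "continuous_on UNIV polar_arg"
proof -
  have "\<forall>\<phi>\<in>UNIV. Re (frame \<phi>) \<noteq> 0" using Re_frame_ge delta_pos by (metis not_less order_less_le_trans)
  then show ?thesis unfolding polar_arg_def[abs_def]
    by (intro continuous_intros continuous_frame continuous_on_arctan) auto
qed

lemma polar_arg_periodic: "polar_arg (\<phi> + 2*pi) = polar_arg \<phi> + 2*pi"
  by (simp add: polar_arg_def frame_periodic)

lemma polar_arg_bounds: "\<phi> - pi/2 < polar_arg \<phi>" "polar_arg \<phi> < \<phi> + pi/2"
  using arctan_bounded[of "Im (frame \<phi>) / Re (frame \<phi>)"] by (auto simp: polar_arg_def)

text \<open>A step of normal angle over which the polar angle cannot decrease; it is so small that
  D sin step <= delta cos step, and the polar angle stays within pi/2 - step of the normal angle.\<close>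
definition step_angle :: real where "step_angle = arctan (\<delta> / D)"

lemma step_angle_bounds: "0 < step_angle" "step_angle < pi/2"
  using delta_pos D_ge_1 arctan_ubound[of "\<delta>/D"] by (auto simp: step_angle_def)

lemma step_angle_tan: "D * sin step_angle = \<delta> * cos step_angle"
proof -
  have "tan step_angle = \<delta> / D" by (simp add: step_angle_def tan_arctan)
  moreover have "cos step_angle > 0" using step_angle_bounds by (intro cos_gt_zero) auto
  ultimately show ?thesis using D_ge_1 by (simp add: tan_def field_simps)
qed

lemma arctan_frame_bound: "\<bar>arctan (Im (frame \<phi>) / Re (frame \<phi>))\<bar> \<le> pi/2 - step_angle"
proof -
  define u where "u = Im (frame \<phi>) / Re (frame \<phi>)"
  have re: "Re (frame \<phi>) \<ge> \<delta>" by (rule Re_frame_ge)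
  have im: "\<bar>Im (frame \<phi>)\<bar> \<le> D"
    using abs_Im_le_cmod[of "frame \<phi>"] norm_frame[of \<phi>] D_bound[OF supp_pt_prop(1)[of \<phi>]] by linarith
  have "\<bar>u\<bar> = \<bar>Im (frame \<phi>)\<bar> / Re (frame \<phi>)" using re delta_pos by (simp add: u_def)
  also have "\<dots> \<le> D / \<delta>" using re im delta_pos D_ge_1 by (intro frac_le) auto
  finally have "\<bar>u\<bar> \<le> D / \<delta>" .
  then have "arctan u \<le> arctan (D / \<delta>)" "- arctan u \<le> arctan (D / \<delta>)"
    by (simp_all add: arctan_le_iff arctan_minus[symmetric])
  moreover have "arctan (D / \<delta>) = pi/2 - step_angle"
    using arctan_inverse[of "\<delta> / D"] delta_pos D_ge_1 by (simp add: step_angle_def)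
  ultimately show ?thesis unfolding u_def by linarith
qed

lemma cross_nonneg:
  assumes "\<phi> \<le> \<phi>'" "\<phi>' \<le> \<phi> + step_angle"
  shows "cross (supp_pt \<phi> - c) (supp_pt \<phi>' - c) \<ge> 0"
proof (cases "\<phi>' = \<phi>")
  case True then show ?thesis by (simp add: cross_def)
next
  case False
  define \<Delta> where "\<Delta> = \<phi>' - \<phi>"
  have \<Delta>: "0 < \<Delta>" "\<Delta> \<le> step_angle" using assms False by (auto simp: \<Delta>_def)
  have sin: "sin \<Delta> > 0" using \<Delta> step_angle_bounds by (intro sin_gt_zero) auto
  have cos: "cos \<Delta> > 0" using \<Delta> step_angle_bounds by (intro cos_gt_zero) auto
  have "sin \<Delta> \<le> sin step_angle" using \<Delta> step_angle_bounds by (intro sin_monotone_2pi_le) auto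
  moreover have "cos step_angle \<le> cos \<Delta>" using \<Delta> step_angle_bounds by (intro cos_monotone_0_pi_le) auto
  ultimately have small: "D * sin \<Delta> \<le> \<delta> * cos \<Delta>"
    using step_angle_tan D_ge_1 delta_pos by (smt (verit, best) mult_left_mono)
  define x where "x = supp_pt \<phi> - c"
  define d where "d = supp_pt \<phi>' - supp_pt \<phi>"
  have p: "proj d \<phi> \<le> 0" using proj_le_supp[of \<phi>' \<phi>] supp_eq[of \<phi>] by (simp add: d_def proj_diff)
  have "proj d \<phi>' \<ge> 0" using proj_le_supp[of \<phi> \<phi>'] supp_eq[of \<phi>'] by (simp add: d_def proj_diff)
  moreover have "proj d \<phi>' = proj d \<phi> * cos \<Delta> + proj d (\<phi> + pi/2) * sin \<Delta>"
  proof -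
    have "\<phi>' = \<phi> + \<Delta>" by (simp add: \<Delta>_def)
    then show ?thesis unfolding proj_perp by (simp add: proj_def cos_add sin_add algebra_simps)
  qed
  ultimately have pq: "0 \<le> proj d \<phi> * cos \<Delta> + proj d (\<phi> + pi/2) * sin \<Delta>" by simp
  have h: "\<delta> \<le> proj x \<phi>" using Re_frame_ge[of \<phi>] by (simp add: Re_frame x_def)
  have w: "\<bar>proj x (\<phi> + pi/2)\<bar> \<le> D"
    using abs_proj_le_norm[of x "\<phi> + pi/2"] D_bound[OF supp_pt_prop(1)[of \<phi>]] by (simp add: x_def)
  have "cross x (x + d) = cross x d" by (simp add: cross_def algebra_simps)
  also have "\<dots> = proj x \<phi> * proj d (\<phi> + pi/2) - proj x (\<phi> + pi/2) * proj d \<phi>" by (rule cross_proj)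
  also have "\<dots> \<ge> 0" by (rule small_rotation_cross_nonneg[OF p pq h w small sin cos])
  finally show ?thesis by (simp add: x_def d_def)
qed

text \<open>Consequently the polar angle increases over one step (the polar angles differ by less than pi).\<close>
lemma polar_arg_local:
  assumes "\<phi> \<le> \<phi>'" "\<phi>' \<le> \<phi> + step_angle"
  shows "polar_arg \<phi> \<le> polar_arg \<phi>'"
proof -
  have close: "polar_arg \<phi>' - polar_arg \<phi> > - pi"
    using arctan_frame_bound[of \<phi>] arctan_frame_bound[of \<phi>'] assms step_angle_bounds
    unfolding polar_arg_def by linarith
  have "cross (supp_pt \<phi> - c) (supp_pt \<phi>' - c) =
        norm (supp_pt \<phi> - c) * norm (supp_pt \<phi>' - c) * sin (polar_arg \<phi>' - polar_arg \<phi>)"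
    by (subst supp_pt_polar, subst (2) supp_pt_polar) (rule cross_cis)
  moreover have "norm (supp_pt \<phi> - c) * norm (supp_pt \<phi>' - c) > 0"
    using supp_pt_ne_c[of \<phi>] supp_pt_ne_c[of \<phi>'] by simp
  ultimately have sin: "sin (polar_arg \<phi>' - polar_arg \<phi>) \<ge> 0"
    using cross_nonneg[OF assms] by (metis zero_le_mult_iff not_le)
  show ?thesis
  proof (rule ccontr)
    assume "\<not> polar_arg \<phi> \<le> polar_arg \<phi>'"
    then have "sin (polar_arg \<phi> - polar_arg \<phi>') > 0" using close by (intro sin_gt_zero) auto
    moreover have "sin (polar_arg \<phi> - polar_arg \<phi>') = - sin (polar_arg \<phi>' - polar_arg \<phi>)"
      by (metis minus_diff_eq sin_minus)
    ultimately show False using sin by linarith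
  qed
qed

lemma polar_arg_mono_steps:
  "\<phi> \<le> \<phi>' \<Longrightarrow> \<phi>' \<le> \<phi> + real n * step_angle \<Longrightarrow> polar_arg \<phi> \<le> polar_arg \<phi>'"
proof (induction n arbitrary: \<phi>')
  case (Suc n)
  show ?case
  proof (cases "\<phi>' \<le> \<phi> + step_angle")
    case True then show ?thesis using polar_arg_local Suc.prems by blast
  next
    case False
    have "polar_arg \<phi> \<le> polar_arg (\<phi>' - step_angle)"
      using Suc.prems False by (intro Suc.IH) (auto simp: algebra_simps)
    also have "\<dots> \<le> polar_arg \<phi>'" using step_angle_bounds by (intro polar_arg_local) auto
    finally show ?thesis .
  qed
qed simp

lemma polar_arg_mono: "\<phi> \<le> \<phi>' \<Longrightarrow> polar_arg \<phi> \<le> polar_arg \<phi>'"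
proof -
  assume le: "\<phi> \<le> \<phi>'"
  obtain n where "(\<phi>' - \<phi>) / step_angle \<le> real n" using real_arch_simple by blast
  then have "\<phi>' \<le> \<phi> + real n * step_angle" using step_angle_bounds by (simp add: field_simps)
  then show ?thesis using polar_arg_mono_steps le by blast
qed

text \<open>The least normal angle at which the polar angle reaches x; since the polar angle is continuous,
  nondecreasing and within pi/2 of the normal angle, it attains x there.\<close>
definition normal_at :: "real \<Rightarrow> real" where
  "normal_at x = Inf {\<phi>. x \<le> polar_arg \<phi>}"

lemma normal_at_set:
  shows "x + pi/2 \<in> {\<phi>. x \<le> polar_arg \<phi>}" "bdd_below {\<phi>. x \<le> polar_arg \<phi>}" "closed {\<phi>. x \<le> polar_arg \<phi>}"
proof -
  show "x + pi/2 \<in> {\<phi>. x \<le> polar_arg \<phi>}" using polar_arg_bounds(1)[of "x + pi/2"] by simp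
  show "bdd_below {\<phi>. x \<le> polar_arg \<phi>}"
    unfolding bdd_below_def using polar_arg_bounds(2) by (metis (mono_tags, lifting) diff_le_eq
        less_eq_real_def mem_Collect_eq order_trans)
  show "closed {\<phi>. x \<le> polar_arg \<phi>}" by (intro closed_Collect_le continuous_on_const continuous_polar_arg)
qed

lemma normal_at_in: "x \<le> polar_arg (normal_at x)"
proof -
  have "Inf {\<phi>. x \<le> polar_arg \<phi>} \<in> {\<phi>. x \<le> polar_arg \<phi>}"
    using normal_at_set by (intro closed_contains_Inf) auto
  then show ?thesis by (simp add: normal_at_def)
qed

lemma normal_at_lower: "x \<le> polar_arg \<phi> \<Longrightarrow> normal_at x \<le> \<phi>"
  unfolding normal_at_def using normal_at_set(2) by (intro cInf_lower) auto

lemma normal_at_polar_arg: "polar_arg (normal_at x) = x"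
proof -
  have "continuous_on {x - pi/2 .. x + pi/2} polar_arg" using continuous_polar_arg continuous_on_subset by blast
  moreover have "polar_arg (x - pi/2) \<le> x" "x \<le> polar_arg (x + pi/2)"
    using polar_arg_bounds(2)[of "x - pi/2"] polar_arg_bounds(1)[of "x + pi/2"] by auto
  ultimately obtain \<phi>0 where "polar_arg \<phi>0 = x" using IVT'[of polar_arg "x - pi/2" x "x + pi/2"] by auto
  then have "normal_at x \<le> \<phi>0" by (intro normal_at_lower) simp
  then have "polar_arg (normal_at x) \<le> x" using polar_arg_mono \<open>polar_arg \<phi>0 = x\<close> by metis
  then show ?thesis using normal_at_in[of x] by simp
qed

lemma normal_at_mono: "x \<le> y \<Longrightarrow> normal_at x \<le> normal_at y"
  using normal_at_lower[of x "normal_at y"] normal_at_polar_arg[of y] by simp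

lemma normal_at_shift: "normal_at (x + 2*pi) = normal_at x + 2*pi"
proof -
  have "normal_at (x + 2*pi) \<le> normal_at x + 2*pi"
    by (intro normal_at_lower) (simp add: polar_arg_periodic normal_at_polar_arg)
  moreover have "polar_arg (normal_at (x + 2*pi) - 2*pi) = x"
    using polar_arg_periodic[of "normal_at (x + 2*pi) - 2*pi"] normal_at_polar_arg[of "x + 2*pi"] by simp
  then have "normal_at x \<le> normal_at (x + 2*pi) - 2*pi" by (intro normal_at_lower) simp
  ultimately show ?thesis by simp
qed

lemma frontier_eq_supp_pt:
  assumes z: "z \<in> frontier S" and r: "r > 0" and eq: "z - c = complex_of_real r * cis x"
  shows "z = supp_pt (normal_at x)"
proof -
  define R where "R = norm (supp_pt (normal_at x) - c)"
  have R: "R > 0" using supp_pt_ne_c by (simp add: R_def)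
  have sR: "supp_pt (normal_at x) - c = complex_of_real R * cis x"
    using supp_pt_polar[of "normal_at x"] normal_at_polar_arg[of x] by (simp add: R_def)
  have "z - c = complex_of_real (r / R) * (supp_pt (normal_at x) - c)"
    using R by (simp add: eq sR)
  moreover have "r / R > 0" using R r by simp
  ultimately show ?thesis using radial_unique[OF z supp_pt_frontier] by blast
qed

lemma supp_pt_normal_at_polar_arg: "supp_pt (normal_at (polar_arg \<phi>)) = supp_pt \<phi>"
  using frontier_eq_supp_pt[OF supp_pt_frontier supp_pt_ne_c supp_pt_polar] by simp
end

lemma simple_loop_homeomorphic_image:
  assumes g: "simple_path g" "pathfinish g = pathstart g"
    and h: "homeomorphism (path_image g) T h h'"
  shows "simple_path (h \<circ> g) \<and> pathfinish (h \<circ> g) = pathstart (h \<circ> g) \<and> path_image (h \<circ> g) = T"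
proof (intro conjI)
  have "continuous_on (path_image g) h" using h by (simp add: homeomorphism_def)
  then have "path (h \<circ> g)" using g(1) by (intro path_continuous_image) (auto simp: simple_path_def)
  moreover have "loop_free (h \<circ> g)"
    unfolding loop_free_def
  proof (intro ballI impI)
    fix x y :: real assume xy: "x \<in> {0..1}" "y \<in> {0..1}" "(h \<circ> g) x = (h \<circ> g) y"
    have "g x \<in> path_image g" "g y \<in> path_image g" using xy by (auto simp: path_image_def)
    then have "g x = g y" using h xy(3) unfolding homeomorphism_def by (metis comp_apply)
    then show "x = y \<or> x = 0 \<and> y = 1 \<or> x = 1 \<and> y = 0"
      using g(1) xy unfolding simple_path_def loop_free_def by blast
  qed
  ultimately show "simple_path (h \<circ> g)" by (simp add: simple_path_def)
  show "pathfinish (h \<circ> g) = pathstart (h \<circ> g)" using g(2) by (simp add: pathstart_compose pathfinish_compose)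
  show "path_image (h \<circ> g) = T" using h by (simp add: path_image_compose homeomorphism_def)
qed

context interior_ball
begin

text \<open>The boundary of S is a simple closed curve: it is homeomorphic to the unit circle.\<close>
lemma boundary_simple_loop_exists:
  "\<exists>g. simple_path g \<and> pathfinish g = pathstart g \<and> path_image g = frontier S"
proof -
  have int_ne: "interior S \<noteq> {}" using c_interior by auto
  have "aff_dim S = aff_dim (cball (0::complex) 1)"
    using aff_dim_nonempty_interior[OF int_ne] aff_dim_cball[of 1 "0::complex"] by simp
  then have "rel_frontier (cball (0::complex) 1) homeomorphic rel_frontier S"
    by (intro homeomorphic_rel_frontiers_convex_bounded_sets convex_cball bounded_cball convex
        compact_imp_bounded[OF compact]) simp
  then have "path_image (circlepath 0 1) homeomorphic frontier S"
    using rel_frontier_nonempty_interior[OF int_ne] by simp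
  then obtain h h' where "homeomorphism (path_image (circlepath 0 1)) (frontier S) h h'"
    by (auto simp: homeomorphic_def)
  from simple_loop_homeomorphic_image[OF _ _ this] show ?thesis
    by (metis simple_path_circlepath pathstart_circlepath pathfinish_circlepath zero_neq_one)
qed

lemma polar_angle_lift:
  assumes g: "simple_path g" and img: "path_image g = frontier S"
  obtains \<Theta> where "continuous_on {0..1} \<Theta>"
    "\<And>t. t \<in> {0..1} \<Longrightarrow> g t - c = complex_of_real (norm (g t - c)) * cis (\<Theta> t)"
proof -
  have cont: "continuous_on {0..1} (\<lambda>t. g t - c)"
    using g by (intro continuous_intros) (auto simp: simple_path_def path_def)
  have nz: "g t - c \<noteq> 0" if "t \<in> {0..1}" for t
  proof -
    have "g t \<in> frontier S" using img that by (auto simp: path_image_def)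
    then show ?thesis using frontier_ne_c by simp
  qed
  obtain L where L: "continuous_on {0..1} L" "\<And>t. t \<in> {0..1} \<Longrightarrow> g t - c = exp (L t)"
    using continuous_logarithm_on_contractible[OF cont convex_imp_contractible[OF convex_real_interval(5)] nz]
    by blast
  show ?thesis
  proof
    show "continuous_on {0..1} (\<lambda>t. Im (L t))" by (intro continuous_intros L(1))
    fix t :: real assume t: "t \<in> {0..1}"
    have "g t - c = complex_of_real (exp (Re (L t))) * cis (Im (L t))"
      using L(2)[OF t] exp_eq_polar by simp
    moreover have "norm (g t - c) = exp (Re (L t))" using L(2)[OF t] by simp
    ultimately show "g t - c = complex_of_real (norm (g t - c)) * cis (Im (L t))" by simp
  qed
qed

end

locale boundary_curve = interior_ball +
  fixes g :: "real \<Rightarrow> complex" and \<Theta> :: "real \<Rightarrow> real"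
  assumes simple: "simple_path g" and closed: "pathfinish g = pathstart g"
    and image: "path_image g = frontier S"
    and continuous_Theta: "continuous_on {0..1} \<Theta>"
    and polar: "\<And>t. t \<in> {0..1} \<Longrightarrow> g t - c = complex_of_real (norm (g t - c)) * cis (\<Theta> t)"
begin

lemma g_frontier: "t \<in> {0..1} \<Longrightarrow> g t \<in> frontier S"
  using image by (auto simp: path_image_def)

lemma g_eq_supp_pt: "t \<in> {0..1} \<Longrightarrow> g t = supp_pt (normal_at (\<Theta> t))"
  using frontier_eq_supp_pt[OF g_frontier _ polar] frontier_ne_c[OF g_frontier] by simp

lemma g_cis:
  assumes t: "t \<in> {0..1}" "t' \<in> {0..1}" and e: "cis (\<Theta> t) = cis (\<Theta> t')"
  shows "g t = g t'"
proof -
  have pos: "norm (g t - c) > 0" using frontier_ne_c[OF g_frontier[OF t(1)]] by simp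
  have "g t - c = complex_of_real (norm (g t - c)) * cis (\<Theta> t')" using polar[OF t(1)] e by simp
  then have "g t = supp_pt (normal_at (\<Theta> t'))" by (rule frontier_eq_supp_pt[OF g_frontier[OF t(1)] pos])
  then show ?thesis using g_eq_supp_pt[OF t(2)] by simp
qed

lemma loop_free: "t \<in> {0..1} \<Longrightarrow> t' \<in> {0..1} \<Longrightarrow> g t = g t' \<Longrightarrow> t = t' \<or> t = 0 \<and> t' = 1 \<or> t = 1 \<and> t' = 0"
  using simple unfolding simple_path_def loop_free_def by blast

lemma g_end: "g 1 = g 0"
  using closed by (simp add: pathfinish_def pathstart_def)

lemma Theta_inj: "inj_on \<Theta> {0..<1}"
proof (rule inj_onI)
  fix t t' assume t: "t \<in> {0..<1}" "t' \<in> {0..<1}" and e: "\<Theta> t = \<Theta> t'"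
  then have "g t = g t'" using g_cis by auto
  then show "t = t'" using loop_free[of t t'] t by auto
qed

text \<open>Being continuous and injective on [0, 1), the polar angle is strictly monotone there.\<close>
lemma Theta_monotone: "strict_mono_on {0..<1} \<Theta> \<or> strict_antimono_on {0..<1} \<Theta>"
proof -
  have "is_interval {0..<(1::real)}" by (simp add: is_interval_ic)
  moreover have "continuous_on {0..<1} \<Theta>" by (rule continuous_on_subset[OF continuous_Theta]) auto
  ultimately show ?thesis using injective_eq_monotone_map Theta_inj by blast
qed

end

locale boundary_curve_ccw = boundary_curve +
  assumes Theta_strict_mono: "strict_mono_on {0..<1} \<Theta>"
begin

lemma Theta_not_full_turn:
  assumes t: "t \<in> {0<..<1}" shows "\<Theta> t \<noteq> \<Theta> 0 + 2*pi"
proof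
  assume "\<Theta> t = \<Theta> 0 + 2*pi"
  then have "cis (\<Theta> t) = cis (\<Theta> 0)" by (simp add: complex_eq_iff)
  then have "g t = g 0" using g_cis t by auto
  then show False using loop_free[of t 0] t by auto
qed

lemma Theta_less_full_turn: "t \<in> {0..<1} \<Longrightarrow> \<Theta> t < \<Theta> 0 + 2*pi"
proof (rule ccontr)
  assume t: "t \<in> {0..<1}" and n: "\<not> \<Theta> t < \<Theta> 0 + 2*pi"
  have "continuous_on {0..t} \<Theta>" using continuous_Theta t by (auto intro: continuous_on_subset)
  then obtain t' where t': "t' \<in> {0..t}" "\<Theta> t' = \<Theta> 0 + 2*pi"
    using IVT'[of \<Theta> 0 "\<Theta> 0 + 2*pi" t] n t by auto
  have "t' \<noteq> 0" using t' pi_gt_zero by auto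
  then show False using Theta_not_full_turn[of t'] t t' by auto
qed

text \<open>By continuity the monotonicity persists up to the endpoint (otherwise some value below
  Theta (1/2) would be taken twice on [0, 1)).\<close>
lemma Theta_half_le_end: "\<Theta> (1/2) \<le> \<Theta> 1"
proof (rule ccontr)
  assume a: "\<not> \<Theta> (1/2) \<le> \<Theta> 1"
  have h: "\<Theta> 0 < \<Theta> (1/2)" using Theta_strict_mono by (auto simp: strict_mono_on_def)
  define v where "v = (max (\<Theta> 0) (\<Theta> 1) + \<Theta> (1/2)) / 2"
  have v: "\<Theta> 0 < v" "v < \<Theta> (1/2)" "\<Theta> 1 < v" using h a by (auto simp: v_def)
  have "continuous_on {1/2..1} \<Theta>" "continuous_on {0..1/2} \<Theta>"
    using continuous_Theta by (auto intro: continuous_on_subset)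
  then obtain t1 t2 where t1: "t1 \<in> {1/2..1}" "\<Theta> t1 = v" and t2: "t2 \<in> {0..1/2}" "\<Theta> t2 = v"
    using IVT2'[of \<Theta> 1 v "1/2"] IVT'[of \<Theta> 0 v "1/2"] v by auto
  have "\<Theta> t1 \<noteq> \<Theta> (1/2)" "\<Theta> t1 \<noteq> \<Theta> 1" "\<Theta> t2 \<noteq> \<Theta> (1/2)" using t1 t2 v by auto
  then have "t1 \<noteq> 1/2" "t1 \<noteq> 1" "t2 \<noteq> 1/2" by metis+
  then have "t1 \<noteq> t2" "t1 \<in> {0..<1}" "t2 \<in> {0..<1}" using t1 t2 by auto
  then show False using Theta_inj t1 t2 by (metis inj_onD)
qed

lemma Theta_end: "\<Theta> 1 = \<Theta> 0 + 2*pi"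
proof -
  have "\<Theta> 0 < \<Theta> (1/2)" using Theta_strict_mono by (auto simp: strict_mono_on_def)
  then have lower: "\<Theta> 0 < \<Theta> 1" using Theta_half_le_end by simp
  have upper: "\<Theta> 1 \<le> \<Theta> 0 + 2*pi"
  proof (rule ccontr)
    assume "\<not> \<Theta> 1 \<le> \<Theta> 0 + 2*pi"
    then obtain t where t: "t \<in> {0..1}" "\<Theta> t = \<Theta> 0 + 2*pi"
      using IVT'[of \<Theta> 0 "\<Theta> 0 + 2*pi" 1] continuous_Theta pi_gt_zero by auto
    have "t \<noteq> 0" "t \<noteq> 1" using t \<open>\<not> _\<close> pi_gt_zero by auto
    then show False using Theta_not_full_turn[of t] t by auto
  qed
  define r where "r = norm (g 0 - c)"
  have "r > 0" using frontier_ne_c[OF g_frontier[of 0]] by (simp add: r_def)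
  moreover have "g 0 - c = complex_of_real r * cis (\<Theta> 0)" unfolding r_def by (rule polar) simp
  moreover have "g 0 - c = complex_of_real r * cis (\<Theta> 1)"
    unfolding r_def by (subst (1 2) g_end[symmetric], rule polar) simp
  ultimately have "cis (\<Theta> 1) = cis (\<Theta> 0)" by simp
  then have "cis (\<Theta> 1 - \<Theta> 0) = 1" by (simp add: cis_divide[symmetric])
  then have "cos (\<Theta> 1 - \<Theta> 0) = 1" by (simp add: complex_eq_iff)
  then have "\<not> (0 < \<Theta> 1 - \<Theta> 0 \<and> \<Theta> 1 - \<Theta> 0 < 2*pi)" using cos_ne_1_within_period by blast
  then show ?thesis using lower upper by linarith
qed

lemma Theta_less: "t \<in> {0..1} \<Longrightarrow> t' \<in> {0..1} \<Longrightarrow> t < t' \<Longrightarrow> \<Theta> t < \<Theta> t'"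
proof (cases "t' = 1")
  case True
  then show "t \<in> {0..1} \<Longrightarrow> t' \<in> {0..1} \<Longrightarrow> t < t' \<Longrightarrow> \<Theta> t < \<Theta> t'"
    using Theta_less_full_turn[of t] Theta_end by auto
next
  case False
  then show "t \<in> {0..1} \<Longrightarrow> t' \<in> {0..1} \<Longrightarrow> t < t' \<Longrightarrow> \<Theta> t < \<Theta> t'"
    using Theta_strict_mono by (auto simp: strict_mono_on_def)
qed

lemma Theta_le: "t \<in> {0..1} \<Longrightarrow> t' \<in> {0..1} \<Longrightarrow> t \<le> t' \<Longrightarrow> \<Theta> t \<le> \<Theta> t'"
  using Theta_less[of t t'] by (cases "t = t'") auto

lemma Theta_inj_closed: "t \<in> {0..1} \<Longrightarrow> t' \<in> {0..1} \<Longrightarrow> \<Theta> t = \<Theta> t' \<Longrightarrow> t = t'"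
  using Theta_less[of t t'] Theta_less[of t' t] by (cases t t' rule: linorder_cases) auto

text \<open>Inscribed polygons are no longer than the support integral: each side is a chord between
  support points and the arcs add up to one full turn.\<close>
lemma inscribed_le_supp_integral:
  assumes "y \<in> inscribed_lengths g"
  shows "y \<le> supp_integral"
proof -
  obtain n t where y: "y = (\<Sum>i<n. norm (g (t (Suc i)) - g (t i)))"
    and t0: "t 0 = 0" and tn: "t n = 1" and tm: "\<forall>i<n. t i \<le> t (Suc i)"
    using assms by (auto simp: inscribed_lengths_def)
  have tr: "i \<le> n \<Longrightarrow> t i \<in> {0..1}" for i
    using chain_mono[OF tm, of 0 i] chain_mono[OF tm, of i n] t0 tn by auto
  define a where "a i = normal_at (\<Theta> (t i))" for i
  have am: "\<forall>i<n. a i \<le> a (Suc i)"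
    using tr tm by (auto simp: a_def intro!: normal_at_mono Theta_le)
  have an: "a n = a 0 + 2*pi" using Theta_end by (simp add: a_def t0 tn normal_at_shift)
  have ga: "i \<le> n \<Longrightarrow> g (t i) = supp_pt (a i)" for i using g_eq_supp_pt tr by (simp add: a_def)
  have "y \<le> (\<Sum>i<n. arc_len (a i) (a (Suc i)))"
    unfolding y
  proof (rule sum_mono)
    fix i assume "i \<in> {..<n}"
    then have i: "i < n" by simp
    have "a (Suc i) \<le> a n" "a 0 \<le> a i" using chain_mono[OF am, of "Suc i" n] chain_mono[OF am, of 0 i] i by simp_all
    then have "a (Suc i) \<le> a i + 2*pi" using an by simp
    then show "norm (g (t (Suc i)) - g (t i)) \<le> arc_len (a i) (a (Suc i))"
      using ga[of i] ga[of "Suc i"] i am by (auto intro!: chord_le)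
  qed
  also have "\<dots> = arc_len (a 0) (a n)" by (rule arc_len_telescope[OF am])
  also have "\<dots> = supp_integral" using an arc_len_period by simp
  finally show ?thesis .
qed

definition param :: "real \<Rightarrow> real" where
  "param x = (SOME \<tau>. \<tau> \<in> {0..1} \<and> \<Theta> \<tau> = x)"

lemma param:
  assumes "\<Theta> 0 \<le> x" "x \<le> \<Theta> 1"
  shows "param x \<in> {0..1}" "\<Theta> (param x) = x"
proof -
  have "\<exists>\<tau>. \<tau> \<in> {0..1} \<and> \<Theta> \<tau> = x" using IVT'[of \<Theta> 0 x 1] continuous_Theta assms by auto
  then have "param x \<in> {0..1} \<and> \<Theta> (param x) = x" unfolding param_def by (rule someI_ex)
  then show "param x \<in> {0..1}" "\<Theta> (param x) = x" by auto
qed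

lemma param_mono:
  assumes "\<Theta> 0 \<le> x" "x \<le> y" "y \<le> \<Theta> 1"
  shows "param x \<le> param y"
proof (rule ccontr)
  assume "\<not> param x \<le> param y"
  then have "\<Theta> (param y) < \<Theta> (param x)" using param[of x] param[of y] assms by (intro Theta_less) auto
  then show False using param[of x] param[of y] assms by simp
qed

lemma g_param: "\<Theta> 0 \<le> x \<Longrightarrow> x \<le> \<Theta> 1 \<Longrightarrow> g (param x) = supp_pt (normal_at x)"
  using g_eq_supp_pt[OF param(1)] param(2) by simp

text \<open>Conversely, the polygon through the support points at N equally spaced normal angles has
  length at least cos (pi/N) times the support integral (lower chord bound).\<close>
lemma inscribed_ge:
  assumes N: "N \<ge> 3"
  shows "\<exists>y\<in>inscribed_lengths g. cos (pi / real N) * supp_integral \<le> y"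
proof -
  define a0 where "a0 = normal_at (\<Theta> 0)"
  define \<phi> where "\<phi> k = a0 + 2*pi*real k / real N" for k
  define t where "t k = param (polar_arg (\<phi> k))" for k
  have Npos: "real N > 0" using N by simp
  have \<phi>_step: "\<phi> (Suc k) - \<phi> k = 2 * pi / real N" for k using Npos by (simp add: \<phi>_def field_simps)
  have \<phi>_less: "\<phi> k < \<phi> (Suc k)" for k
    using \<phi>_step[of k] divide_pos_pos[of "2*pi" "real N"] Npos pi_gt_zero by linarith
  have "2 * pi / real N < pi" using N pi_gt_zero by (simp add: field_simps)
  then have step_pi: "\<phi> (Suc k) - \<phi> k < pi" for k using \<phi>_step[of k] by simp
  have x0: "polar_arg (\<phi> 0) = \<Theta> 0" by (simp add: \<phi>_def a0_def normal_at_polar_arg)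
  have xN: "polar_arg (\<phi> N) = \<Theta> 1"
    using Npos by (simp add: \<phi>_def a0_def polar_arg_periodic normal_at_polar_arg Theta_end)
  have x_mono: "k \<le> k' \<Longrightarrow> polar_arg (\<phi> k) \<le> polar_arg (\<phi> k')" for k k'
    using Npos by (auto simp: \<phi>_def intro!: polar_arg_mono divide_right_mono)
  have range: "\<Theta> 0 \<le> polar_arg (\<phi> k)" "polar_arg (\<phi> k) \<le> \<Theta> 1" if "k \<le> N" for k
    using x_mono[of 0 k] x_mono[of k N] that x0 xN by auto
  have t0: "t 0 = 0" using param[of "\<Theta> 0"] Theta_inj_closed[of "t 0" 0] Theta_end pi_gt_zero
    by (simp add: t_def x0)
  have tN: "t N = 1" using param[of "\<Theta> 1"] Theta_inj_closed[of "t N" 1] Theta_end pi_gt_zero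
    by (simp add: t_def xN)
  have tm: "\<forall>i<N. t i \<le> t (Suc i)"
    using range x_mono by (auto simp: t_def intro!: param_mono)
  have gt: "k \<le> N \<Longrightarrow> g (t k) = supp_pt (\<phi> k)" for k
    using g_param range by (simp add: t_def supp_pt_normal_at_polar_arg)
  have "cos (pi / real N) * supp_integral = cos (pi / real N) * arc_len (\<phi> 0) (\<phi> N)"
    using arc_len_period[of a0] Npos by (simp add: \<phi>_def)
  also have "\<dots> = (\<Sum>i<N. cos (pi / real N) * arc_len (\<phi> i) (\<phi> (Suc i)))"
  proof -
    have "(\<Sum>i<N. arc_len (\<phi> i) (\<phi> (Suc i))) = arc_len (\<phi> 0) (\<phi> N)"
      using \<phi>_less by (intro arc_len_telescope) (simp add: less_imp_le)
    then show ?thesis by (simp add: sum_distrib_left[symmetric])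
  qed
  also have "\<dots> \<le> (\<Sum>i<N. norm (g (t (Suc i)) - g (t i)))"
  proof (rule sum_mono)
    fix i assume "i \<in> {..<N}"
    then have i: "i < N" by simp
    have "cos ((\<phi> (Suc i) - \<phi> i) / 2) * arc_len (\<phi> i) (\<phi> (Suc i)) \<le> norm (supp_pt (\<phi> (Suc i)) - supp_pt (\<phi> i))"
      using \<phi>_less step_pi by (intro chord_ge)
    moreover have "(\<phi> (Suc i) - \<phi> i) / 2 = pi / real N" using \<phi>_step by simp
    ultimately show "cos (pi / real N) * arc_len (\<phi> i) (\<phi> (Suc i)) \<le> norm (g (t (Suc i)) - g (t i))"
      using gt[of i] gt[of "Suc i"] i by simp
  qed
  finally show ?thesis using t0 tN tm unfolding inscribed_lengths_def by blast
qed

lemma curve_length_eq: "curve_length g = supp_integral"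
proof -
  have "inscribed_lengths g \<noteq> {}"
  proof -
    have "(\<Sum>i<1. norm (g (real (Suc i)) - g (real i))) \<in> inscribed_lengths g"
      unfolding inscribed_lengths_def by (intro CollectI exI[of _ "1::nat"] exI[of _ "\<lambda>k. real k"]) auto
    then show ?thesis by blast
  qed
  then have le: "Sup (inscribed_lengths g) \<le> supp_integral"
    using inscribed_le_supp_integral by (intro cSup_least) auto
  have bdd: "bdd_above (inscribed_lengths g)"
    using inscribed_le_supp_integral by (auto simp: bdd_above_def)
  have ge: "cos (pi / real N) * supp_integral \<le> Sup (inscribed_lengths g)" if "N \<ge> 3" for N
    using inscribed_ge[OF that] cSup_upper[OF _ bdd] by (meson order_trans)
  have "(\<lambda>N. cos (pi / real N) * supp_integral) \<longlonglongrightarrow> cos 0 * supp_integral"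
    by (intro tendsto_intros lim_const_over_n)
  then have "supp_integral \<le> Sup (inscribed_lengths g)"
    using LIMSEQ_le_const2 ge by fastforce
  then show ?thesis using le by (simp add: curve_length_Sup)
qed

end

context interior_ball
begin

text \<open>Cauchy's formula for an arbitrary simple closed parametrisation of the boundary; a clockwise
  one is reversed first.\<close>
lemma curve_length_boundary:
  assumes g: "simple_path g" "pathfinish g = pathstart g" "path_image g = frontier S"
  shows "curve_length g = supp_integral"
proof -
  obtain \<Theta> where \<Theta>: "continuous_on {0..1} \<Theta>"
    "\<And>t. t \<in> {0..1} \<Longrightarrow> g t - c = complex_of_real (norm (g t - c)) * cis (\<Theta> t)"
    using polar_angle_lift[OF g(1,3)] by blast
  interpret G: boundary_curve S c \<delta> D g \<Theta>
    by unfold_locales (use g \<Theta> in auto)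
  consider "strict_mono_on {0..<1} \<Theta>" | "strict_antimono_on {0..<1} \<Theta>" using G.Theta_monotone by blast
  then show ?thesis
  proof cases
    case 1
    interpret boundary_curve_ccw S c \<delta> D g \<Theta> by unfold_locales (rule 1)
    show ?thesis by (rule curve_length_eq)
  next
    case 2
    define \<Theta>' where "\<Theta>' t = \<Theta> (1 - t)" for t
    have cont': "continuous_on {0..1} \<Theta>'"
      unfolding \<Theta>'_def by (rule continuous_on_compose2[OF \<Theta>(1)]) (auto intro!: continuous_intros)
    have polar': "reversepath g t - c = complex_of_real (norm (reversepath g t - c)) * cis (\<Theta>' t)"
      if "t \<in> {0..1}" for t
      using \<Theta>(2)[of "1 - t"] that by (simp add: \<Theta>'_def reversepath_def)
    interpret G': boundary_curve S c \<delta> D "reversepath g" \<Theta>'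
      by unfold_locales (use g cont' polar' simple_path_reversepath in auto)
    have "\<not> strict_antimono_on {0..<1} \<Theta>'"
    proof
      assume "strict_antimono_on {0..<1} \<Theta>'"
      then have "\<Theta>' (1/2) < \<Theta>' (1/4)" by (auto simp: monotone_on_def)
      moreover have "\<Theta> (3/4) < \<Theta> (1/2)" using 2 by (auto simp: monotone_on_def)
      ultimately show False by (simp add: \<Theta>'_def)
    qed
    then interpret boundary_curve_ccw S c \<delta> D "reversepath g" \<Theta>'
      using G'.Theta_monotone by unfold_locales blast
    show ?thesis using curve_length_eq by (simp add: curve_length_reversepath)
  qed
qed

lemma perimeter_eq: "perimeter S = supp_integral"
proof -
  let ?P = "\<lambda>g. simple_path g \<and> pathfinish g = pathstart g \<and> path_image g = frontier S"
  have "?P (SOME g. ?P g)" using boundary_simple_loop_exists by (rule someI_ex)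
  then show ?thesis
    using boundary_simple_loop_exists curve_length_boundary unfolding perimeter_def by simp
qed

end

text \<open>A singleton is not the image of a simple path, so its perimeter is 0.\<close>
lemma perimeter_singleton: "perimeter {p} = 0"
proof -
  have "\<not> simple_path g" if "path_image g = {p}" for g
  proof
    assume "simple_path g"
    moreover have "g 0 \<in> path_image g" "g (1/2) \<in> path_image g" by (auto simp: path_image_def)
    then have "g 0 = g (1/2)" using that by simp
    ultimately show False unfolding simple_path_def loop_free_def by fastforce
  qed
  moreover have "frontier {p} = {p}" by (simp add: frontier_def)
  ultimately show ?thesis by (auto simp: perimeter_def)
qed

context strictly_convex_set
begin

text \<open>Without interior points, S is a single point: otherwise it would contain a segment,
  which would lie in its boundary.\<close>
lemma empty_interior_singleton:
  assumes "interior S = {}" and "p \<in> S"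
  shows "S = {p}"
proof -
  have frontier: "frontier S = S"
    using assms(1) compact_imp_closed[OF compact] by (simp add: frontier_def)
  have "q = p" if "q \<in> S" for q
    using convex_contains_segment[of S] convex assms(2) that no_boundary_segment frontier by blast
  then show ?thesis using assms(2) by blast
qed

lemma perimeter_eq_supp_integral: "perimeter S = supp_integral"
proof (cases "interior S = {}")
  case True
  obtain p where p: "p \<in> S" using nonempty by blast
  then have S: "S = {p}" using empty_interior_singleton[OF True] by simp
  have "supp_pt \<phi> = p" for \<phi> using supp_pt_prop(1)[of \<phi>] S by blast
  then have "supp = (\<lambda>\<phi>. proj p \<phi>)" by (auto simp: supp_eq)
  then have "(supp has_integral (proj p (0 + pi/2) - proj p (2*pi + pi/2))) {0..2*pi}"
    using proj_has_integral[of 0 "2*pi" p] by simp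
  then have "supp_integral = 0"
    using proj_periodic[of p "pi/2"] by (simp add: supp_integral_def integral_unique add.commute)
  moreover have "perimeter S = 0" using S perimeter_singleton by simp
  ultimately show ?thesis by simp
next
  case False
  then obtain c where "c \<in> interior S" by blast
  then obtain \<delta> where \<delta>: "\<delta> > 0" "cball c \<delta> \<subseteq> S" using mem_interior_cball by blast
  obtain B where B: "\<And>z. z \<in> S \<Longrightarrow> norm z \<le> B"
    using compact_imp_bounded[OF compact] by (auto simp: bounded_iff)
  have "norm (z - c) \<le> max 1 (B + norm c)" if "z \<in> S" for z
    using B[OF that] norm_triangle_ineq4[of z c] by linarith
  then interpret interior_ball S c \<delta> "max 1 (B + norm c)"
    by unfold_locales (use \<delta> in auto)
  show ?thesis by (rule perimeter_eq)
qed

end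

theorem claim3:
  fixes S :: "complex set" and \<alpha> :: real
  assumes "strictly_convex S" and "S \<noteq> {}"
    and "0 < \<alpha>" and "\<alpha> < pi"
  shows "(fdist S \<alpha> has_integral perimeter S * (1 + cos \<alpha>) / sin \<alpha>) {0..2*pi}"
proof -
  interpret wedge_placement S \<alpha> by unfold_locales (use assms in auto)
  show ?thesis using fdist_integral perimeter_eq_supp_integral by simp
qed

end
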